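(* Let $f:U\to\mathbb{R}^3$ be a triply orthogonal system with Lamé coefficients $H_1,H_2,H_3$, and let $\varphi_1,\varphi_2,\varphi_3:U\to\mathbb{R}$ be functions such that, for each $m$, $\varphi_m$ defines Combescure transformations of the coordinate surfaces $x_m=\mathrm{const}$ in the following sense: writing $(m,p,q)$ for the cyclic permutation of $(1,2,3)$ starting with $m$, $\varphi_m$ satisfies $$\partial_{pq}\varphi_m+\partial_q\ln H_p\,\partial_p\varphi_m+\partial_p\ln H_q\,\partial_q\varphi_m+\varphi_m\,\partial_{pq}\ln(H_pH_q)=0,$$ and induces the Combescure transforms $d\hat f^m=h^m_p\partial_pf\,dx_p+h^m_q\partial_qf\,dx_q$ of the surfaces $x_m=\mathrm{const}$, where $$\partial_ph^m_p=\varphi_m\partial_p\ln(H_q\varphi_m),\qquad \partial_qh^m_p=-\varphi_m\partial_q\ln H_p,\qquad h^m_q=h^m_p-\varphi_m .$$ Then there exists a Combescure transformed triply orthogonal system $\hat f$ of $f$ such that the Combescure transformations between corresponding coordinate surfaces $x_m=\mathrm{const}$ of $f$ and $\hat f$ are induced (in this sense) by $\varphi_m$, for $m=1,2,3$, if and only if $$\varphi_1+\varphi_2+\varphi_3=0\quad\text{and}\quad \partial_j\varphi_j=\varphi_i\,\partial_j\ln H_k+\varphi_k\,\partial_j\ln H_i$$ for every cyclic permutation $(i,j,k)$ of $(1,2,3)$.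
   Context: $U\subset\mathbb{R}^3$ open connected, coordinates $(x_1,x_2,x_3)$, $\partial_i=\partial_{x_i}$, $\partial_{ij}=\partial_{x_i}\partial_{x_j}$. A triply orthogonal system is $f:U\to\mathbb{R}^3$ with $\det(\partial_1f,\partial_2f,\partial_3f)\ne0$ and $(\partial_if,\partial_jf)=0$ for $i\ne j$; its Lamé coefficients $H_i$ are defined by $\partial_if=H_iN_i$ with $N_i$ the unit normals of the coordinate surfaces $x_i=\mathrm{const}$. The coordinate surface $x_m=\mathrm{const}$ is parametrized by curvature line coordinates $(x_p,x_q)$ with metric $H_p^2dx_p^2+H_q^2dx_q^2$. A Combescure transform of $f$ is a triply orthogonal system $\hat f$ with $d\hat f=\sum_ih_i\partial_if\,dx_i$ whose coordinate surfaces are Combescure transforms of those of $f$ (equivalently, with the same rotational coefficients $\beta_{ij}=\frac1{H_i}\partial_iH_j$). The functions $h^m_p,h^m_q$ are determined by $\varphi_m$ up to a common additive constant on each coordinate surface. *)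

theory Defs
  imports "HOL-Analysis.Analysis"
begin

text \<open>Points of R^3 are vectors of type real^3; the coordinate indices 1,2,3 are the
elements of the numeral type 3 (arithmetic mod 3), so the cyclic permutation of (1,2,3)
starting with m is (m, m+1, m+2).\<close>

definition pd :: "3 \<Rightarrow> (real^3 \<Rightarrow> 'a::real_normed_vector) \<Rightarrow> real^3 \<Rightarrow> 'a" where
  "pd i g x = frechet_derivative g (at x) (axis i 1)"

fun Ck :: "nat \<Rightarrow> (real^3) set \<Rightarrow> (real^3 \<Rightarrow> 'a::real_normed_vector) \<Rightarrow> bool" where
  "Ck 0 U g = continuous_on U g"
| "Ck (Suc k) U g = (g differentiable_on U \<and> (\<forall>i. Ck k U (pd i g)))"

definition smooth_on3 :: "(real^3) set \<Rightarrow> (real^3 \<Rightarrow> 'a::real_normed_vector) \<Rightarrow> bool" where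
  "smooth_on3 U g = (\<forall>k. Ck k U g)"

definition triply_orthogonal :: "(real^3) set \<Rightarrow> (real^3 \<Rightarrow> real^3) \<Rightarrow> bool" where
  "triply_orthogonal U f =
     (smooth_on3 U f \<and>
      (\<forall>x\<in>U. det (\<chi> i. pd i f x) \<noteq> 0 \<and>
              (\<forall>i j. i \<noteq> j \<longrightarrow> inner (pd i f x) (pd j f x) = 0)))"

definition lame :: "(real^3 \<Rightarrow> real^3) \<Rightarrow> 3 \<Rightarrow> real^3 \<Rightarrow> real" where
  "lame f i x = norm (pd i f x)"

definition phi_equation :: "(real^3) set \<Rightarrow> (real^3 \<Rightarrow> real^3) \<Rightarrow> 3 \<Rightarrow> (real^3 \<Rightarrow> real) \<Rightarrow> bool" where
  "phi_equation U f m \<phi> =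
     (let p = m + 1; q = m + 2; H = lame f in
      \<forall>x\<in>U. pd p (pd q \<phi>) x
              + pd q (\<lambda>y. ln (H p y)) x * pd p \<phi> x
              + pd p (\<lambda>y. ln (H q y)) x * pd q \<phi> x
              + \<phi> x * pd p (pd q (\<lambda>y. ln (H p y * H q y))) x = 0)"

text \<open>fh is a Combescure transform of f on V (d fh = sum h_i d_i f dx_i), and for each m the
Combescure transformation of the coordinate surfaces x_m = const is induced by phi_m:
h_q = h_p - phi_m, d_p h_p = phi_m d_p ln(H_q phi_m) (written as
phi_m d_p ln H_q + d_p phi_m), d_q h_p = - phi_m d_q ln H_p.\<close>
definition combescure_induced ::
  "(real^3) set \<Rightarrow> (real^3 \<Rightarrow> real^3) \<Rightarrow> (3 \<Rightarrow> real^3 \<Rightarrow> real) \<Rightarrow> (real^3 \<Rightarrow> real^3) \<Rightarrow> bool" where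
  "combescure_induced V f \<phi> fh =
     (\<exists>h :: 3 \<Rightarrow> real^3 \<Rightarrow> real.
        (\<forall>i. \<forall>x\<in>V. pd i fh x = h i x *\<^sub>R pd i f x) \<and>
        (\<forall>m. let p = m + 1; q = m + 2; H = lame f in
           \<forall>x\<in>V. h q x = h p x - \<phi> m x
                \<and> pd p (h p) x = \<phi> m x * pd p (\<lambda>y. ln (H q y)) x + pd p (\<phi> m) x
                \<and> pd q (h p) x = - \<phi> m x * pd q (\<lambda>y. ln (H p y)) x))"

end

(* A Combescure transform fh of f has d fh = sum_i h_i (pd i f) dx_i. By the Darboux equations
     pd j (pd i f) = (pd j ln H_i) pd i f + (pd i ln H_j) pd j f,
   this 1-form is closed iff pd j h_i = (h_j - h_i) pd j ln H_i for i ~= j; by the Poincare lemma it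
   then integrates on a ball to a triply orthogonal system, provided no h_i vanishes.

   If the transformation is induced by the phi_m, then h_(m+2) = h_(m+1) - phi_m. Summing over m
   gives phi_1 + phi_2 + phi_3 = 0, and differentiating phi_(i+1) = h_(i+2) - h_i along x_(i+1) gives
   the second condition. Conversely, under the two conditions the derivatives of h_1 prescribed by
   the Combescure relations form a closed 1-form, by the equations for phi_m and the Lame equations.
   A potential of it, shifted by a constant so that h_1, h_2 = h_1 - phi_3 and h_3 = h_1 + phi_2 do
   not vanish near the base point, yields the coefficients of the required transform. *)

theory Submission
  imports Defs
begin

lemma pd_has_derivative: "(g has_derivative D) (at x) \<Longrightarrow> pd i g x = D (axis i 1)"
  unfolding pd_def by (metis frechet_derivative_at)

lemma pd_cong_open:
  assumes "open S" "x \<in> S" "\<And>y. y \<in> S \<Longrightarrow> g y = g' y"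
  shows "pd i g x = pd i g' x"
proof -
  have "(g has_derivative D) (at x) \<longleftrightarrow> (g' has_derivative D) (at x)" for D
    using has_derivative_transform_within_open[OF _ assms(1,2)] assms(3) by metis
  then show ?thesis unfolding pd_def frechet_derivative_def by simp
qed

lemma differentiable_cong_open:
  assumes "open S" "x \<in> S" "\<And>y. y \<in> S \<Longrightarrow> g y = g' y" "g differentiable (at x)"
  shows "g' differentiable (at x)"
  using assms has_derivative_transform_within_open unfolding differentiable_def by metis

lemma differentiable_ln:
  fixes g :: "'a::real_normed_vector \<Rightarrow> real"
  shows "g differentiable (at x) \<Longrightarrow> g x > 0 \<Longrightarrow> (\<lambda>y. ln (g y)) differentiable (at x)"
  unfolding differentiable_def by (blast intro: has_derivative_ln)

lemma pd_add:
  assumes "f differentiable (at x)" "g differentiable (at x)"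
  shows "pd i (\<lambda>y. f y + g y) x = pd i f x + pd i g x"
  using pd_has_derivative[OF has_derivative_add[OF assms[unfolded frechet_derivative_works]]]
  by (simp add: pd_def)

lemma pd_diff:
  assumes "f differentiable (at x)" "g differentiable (at x)"
  shows "pd i (\<lambda>y. f y - g y) x = pd i f x - pd i g x"
  using pd_has_derivative[OF has_derivative_diff[OF assms[unfolded frechet_derivative_works]]]
  by (simp add: pd_def)

lemma pd_minus:
  assumes "f differentiable (at x)"
  shows "pd i (\<lambda>y. - f y) x = - pd i f x"
  using pd_has_derivative[OF has_derivative_minus[OF assms[unfolded frechet_derivative_works]]]
  by (simp add: pd_def)

lemma pd_const: "pd i (\<lambda>y. c :: 'a::real_normed_vector) x = 0"
  using pd_has_derivative[OF has_derivative_const[of c "at x"], of i] by simp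

lemma pd_bilinear:
  fixes f :: "real^3 \<Rightarrow> 'a::real_normed_vector" and g :: "real^3 \<Rightarrow> 'b::real_normed_vector"
    and prod :: "'a \<Rightarrow> 'b \<Rightarrow> 'c::real_normed_vector"
  assumes "bounded_bilinear prod" "f differentiable (at x)" "g differentiable (at x)"
  shows "pd i (\<lambda>y. prod (f y) (g y)) x = prod (pd i f x) (g x) + prod (f x) (pd i g x)"
  using pd_has_derivative[OF bounded_bilinear.FDERIV[OF assms(1)
      assms(2,3)[unfolded frechet_derivative_works]]]
  by (simp add: pd_def add.commute)

lemma pd_mult:
  fixes f g :: "real^3 \<Rightarrow> real"
  assumes "f differentiable (at x)" "g differentiable (at x)"
  shows "pd i (\<lambda>y. f y * g y) x = pd i f x * g x + f x * pd i g x"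
  using pd_bilinear[OF bounded_bilinear_mult assms] .

lemma pd_scaleR:
  fixes f :: "real^3 \<Rightarrow> real" and g :: "real^3 \<Rightarrow> 'a::real_normed_vector"
  assumes "f differentiable (at x)" "g differentiable (at x)"
  shows "pd i (\<lambda>y. f y *\<^sub>R g y) x = pd i f x *\<^sub>R g x + f x *\<^sub>R pd i g x"
  using pd_bilinear[OF bounded_bilinear_scaleR assms] .

lemma pd_inner:
  fixes f g :: "real^3 \<Rightarrow> 'a::real_inner"
  assumes "f differentiable (at x)" "g differentiable (at x)"
  shows "pd i (\<lambda>y. inner (f y) (g y)) x = inner (pd i f x) (g x) + inner (f x) (pd i g x)"
  using pd_bilinear[OF bounded_bilinear_inner assms] .

lemma pd_inverse:
  fixes g :: "real^3 \<Rightarrow> real"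
  assumes "g differentiable (at x)" "g x \<noteq> 0"
  shows "pd i (\<lambda>y. inverse (g y)) x = - pd i g x / (g x)\<^sup>2"
  using pd_has_derivative[OF Deriv.has_derivative_inverse[OF assms(2)
      assms(1)[unfolded frechet_derivative_works]]]
  by (simp add: pd_def power2_eq_square field_simps)

lemma pd_ln:
  fixes g :: "real^3 \<Rightarrow> real"
  assumes "g differentiable (at x)" "g x > 0"
  shows "pd i (\<lambda>y. ln (g y)) x = pd i g x / g x"
  using pd_has_derivative[OF has_derivative_ln[OF assms(2)
      assms(1)[unfolded frechet_derivative_works]]]
  by (simp add: pd_def divide_inverse)

lemma sum_axis_scaleR: "(\<Sum>k\<in>UNIV. axis i (1::real) $ k *\<^sub>R c k) = (c i :: 'a::real_vector)"
proof -
  have "(\<Sum>k\<in>UNIV. axis i (1::real) $ k *\<^sub>R c k) = (\<Sum>k\<in>UNIV. if k = i then c k else 0)"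
    by (intro sum.cong) (auto simp: axis_def)
  then show ?thesis by simp
qed

lemma has_derivative_pd:
  assumes "g differentiable (at x)"
  shows "(g has_derivative (\<lambda>v. \<Sum>k\<in>UNIV. v $ k *\<^sub>R pd k g x)) (at x)"
proof -
  have D: "(g has_derivative frechet_derivative g (at x)) (at x)"
    using assms frechet_derivative_works by blast
  have "frechet_derivative g (at x) v = (\<Sum>k\<in>UNIV. v $ k *\<^sub>R pd k g x)" for v
  proof -
    have v: "(\<Sum>k\<in>UNIV. v $ k *\<^sub>R axis k (1::real)) = v"
      by (metis basis_expansion scalar_mult_eq_scaleR)
    have "frechet_derivative g (at x) (\<Sum>k\<in>UNIV. v $ k *\<^sub>R axis k 1)
        = (\<Sum>k\<in>UNIV. v $ k *\<^sub>R pd k g x)"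
      using has_derivative_linear[OF D] by (simp add: linear_sum linear_scale pd_def)
    then show ?thesis unfolding v .
  qed
  then have "frechet_derivative g (at x) = (\<lambda>v. \<Sum>k\<in>UNIV. v $ k *\<^sub>R pd k g x)"
    by (rule ext)
  with D show ?thesis by simp
qed

lemma Ck_imp_differentiable: "open U \<Longrightarrow> Ck (Suc k) U g \<Longrightarrow> x \<in> U \<Longrightarrow> g differentiable (at x)"
  by (simp add: differentiable_on_eq_differentiable_at)

lemma Ck_cong:
  assumes "open U"
  shows "Ck k U g \<Longrightarrow> (\<And>x. x \<in> U \<Longrightarrow> g x = g' x) \<Longrightarrow> Ck k U g'"
proof (induction k arbitrary: g g')
  case 0
  then show ?case using continuous_on_cong by force
next
  case (Suc k)
  have "g' differentiable (at x)" if "x \<in> U" for x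
    using Suc.prems(2) Ck_imp_differentiable[OF assms Suc.prems(1) that]
    by (rule differentiable_cong_open[OF assms that])
  then have "g' differentiable_on U"
    using assms by (simp add: differentiable_on_eq_differentiable_at)
  moreover have "Ck k U (pd i g')" for i
    using Suc.IH[of "pd i g" "pd i g'"] Suc.prems pd_cong_open[OF assms _ Suc.prems(2)] by auto
  ultimately show ?case by simp
qed

lemma Ck_Suc_imp_Ck: "open U \<Longrightarrow> Ck (Suc k) U g \<Longrightarrow> Ck k U g"
proof (induction k arbitrary: g)
  case 0
  then show ?case by (simp add: differentiable_imp_continuous_on)
next
  case (Suc k)
  then show ?case by simp
qed

lemma Ck_subset: "V \<subseteq> U \<Longrightarrow> Ck k U g \<Longrightarrow> Ck k V g"
proof (induction k arbitrary: g)
  case 0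
  then show ?case using continuous_on_subset by auto
next
  case (Suc k)
  then show ?case using differentiable_on_subset by auto
qed

lemma Ck_const: "Ck k U (\<lambda>x. c)"
proof (induction k arbitrary: c)
  case (Suc k)
  have "pd i (\<lambda>x. c) = (\<lambda>x. 0)" for i
    by (rule ext) (rule pd_const)
  with Suc show ?case by simp
qed simp

lemma Ck_add:
  assumes "open U"
  shows "Ck k U f \<Longrightarrow> Ck k U g \<Longrightarrow> Ck k U (\<lambda>x. f x + g x)"
proof (induction k arbitrary: f g)
  case 0
  then show ?case by (simp add: continuous_on_add)
next
  case (Suc k)
  have "Ck k U (\<lambda>x. pd i f x + pd i g x)" for i
    using Suc by simp
  then have "Ck k U (pd i (\<lambda>x. f x + g x))" for i
    by (rule Ck_cong[OF assms])
      (simp add: pd_add Ck_imp_differentiable[OF assms Suc.prems(1)]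
        Ck_imp_differentiable[OF assms Suc.prems(2)])
  moreover have "(\<lambda>x. f x + g x) differentiable_on U"
    using Suc.prems by (intro differentiable_on_add) simp_all
  ultimately show ?case by simp
qed

lemma Ck_bilinear:
  fixes f :: "real^3 \<Rightarrow> 'a::real_normed_vector" and g :: "real^3 \<Rightarrow> 'b::real_normed_vector"
    and prod :: "'a \<Rightarrow> 'b \<Rightarrow> 'c::real_normed_vector"
  assumes bl: "bounded_bilinear prod" and U: "open U"
  shows "Ck k U f \<Longrightarrow> Ck k U g \<Longrightarrow> Ck k U (\<lambda>x. prod (f x) (g x))"
proof (induction k arbitrary: f g)
  case 0
  then show ?case using bounded_bilinear.continuous_on[OF bl] by simp
next
  case (Suc k)
  have df: "f differentiable (at x)" and dg: "g differentiable (at x)" if "x \<in> U" for x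
    using Ck_imp_differentiable[OF U Suc.prems(1) that] Ck_imp_differentiable[OF U Suc.prems(2) that] .
  have "(\<lambda>y. prod (f y) (g y)) differentiable (at x)" if "x \<in> U" for x
    using df[OF that] dg[OF that] bounded_bilinear.FDERIV[OF bl] unfolding differentiable_def by blast
  then have "(\<lambda>x. prod (f x) (g x)) differentiable_on U"
    using U by (simp add: differentiable_on_eq_differentiable_at)
  moreover have "Ck k U (pd i (\<lambda>x. prod (f x) (g x)))" for i
  proof -
    have "Ck k U f" "Ck k U g"
      using Ck_Suc_imp_Ck[OF U] Suc.prems by blast+
    then have "Ck k U (\<lambda>x. prod (pd i f x) (g x) + prod (f x) (pd i g x))"
      using Suc by (intro Ck_add[OF U]) simp_all
    then show ?thesis
      by (rule Ck_cong[OF U]) (simp add: pd_bilinear[OF bl] df dg)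
  qed
  ultimately show ?case by simp
qed

lemma Ck_inverse:
  fixes g :: "real^3 \<Rightarrow> real"
  assumes U: "open U" and nz: "\<And>x. x \<in> U \<Longrightarrow> g x \<noteq> 0"
  shows "Ck k U g \<Longrightarrow> Ck k U (\<lambda>x. inverse (g x))"
proof (induction k)
  case 0
  then show ?case using nz continuous_on_inverse[of U g] by auto
next
  case (Suc k)
  have dg: "g differentiable (at x)" if "x \<in> U" for x
    using Ck_imp_differentiable[OF U Suc.prems that] .
  have "(\<lambda>x. inverse (g x)) differentiable_on U"
    using dg nz U by (simp add: differentiable_on_eq_differentiable_at)
  moreover have "Ck k U (pd i (\<lambda>x. inverse (g x)))" for i
  proof -
    have inv: "Ck k U (\<lambda>x. inverse (g x))"
      using Suc.IH Ck_Suc_imp_Ck[OF U Suc.prems] by blast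
    have "Ck k U (\<lambda>x. (- 1) * pd i g x)"
      using Suc.prems by (intro Ck_bilinear[OF bounded_bilinear_mult U Ck_const]) simp
    then have "Ck k U (\<lambda>x. ((- 1) * pd i g x) * (inverse (g x) * inverse (g x)))"
      by (rule Ck_bilinear[OF bounded_bilinear_mult U _
            Ck_bilinear[OF bounded_bilinear_mult U inv inv]])
    then show ?thesis
      by (rule Ck_cong[OF U]) (simp add: pd_inverse dg nz power2_eq_square divide_inverse)
  qed
  ultimately show ?case by simp
qed

lemma Ck_ln:
  fixes g :: "real^3 \<Rightarrow> real"
  assumes U: "open U" and pos: "\<And>x. x \<in> U \<Longrightarrow> g x > 0" and g: "Ck k U g"
  shows "Ck k U (\<lambda>x. ln (g x))"
proof (cases k)
  case 0
  then show ?thesis using g pos by (fastforce intro!: continuous_on_ln)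
next
  case (Suc l)
  have dg: "g differentiable (at x)" if "x \<in> U" for x
    using Ck_imp_differentiable[OF U] g Suc that by blast
  have "(\<lambda>x. ln (g x)) differentiable_on U"
    using dg pos U by (auto simp: differentiable_on_eq_differentiable_at intro!: differentiable_ln)
  moreover have "Ck l U (pd i (\<lambda>x. ln (g x)))" for i
  proof -
    have "Ck l U (\<lambda>x. inverse (g x))"
      using pos Ck_Suc_imp_Ck[OF U g[unfolded Suc]] by (intro Ck_inverse[OF U]) fastforce+
    then have "Ck l U (\<lambda>x. pd i g x * inverse (g x))"
      using Ck_bilinear[OF bounded_bilinear_mult U, of l "pd i g"] g Suc by simp
    then show ?thesis
      by (rule Ck_cong[OF U]) (simp add: pd_ln dg pos divide_inverse)
  qed
  ultimately show ?thesis using Suc by simp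
qed

lemma smooth_on3_imp_differentiable:
  "open U \<Longrightarrow> smooth_on3 U g \<Longrightarrow> x \<in> U \<Longrightarrow> g differentiable (at x)"
  unfolding smooth_on3_def using Ck_imp_differentiable by blast

lemma smooth_on3_pd: "smooth_on3 U g \<Longrightarrow> smooth_on3 U (pd i g)"
  unfolding smooth_on3_def by (metis Ck.simps(2))

lemma smooth_on3_intro:
  assumes "open U" "\<And>x. x \<in> U \<Longrightarrow> g differentiable (at x)" "\<And>i. smooth_on3 U (pd i g)"
  shows "smooth_on3 U g"
  unfolding smooth_on3_def
proof
  fix k
  show "Ck k U g"
    using assms by (cases k)
      (auto simp: differentiable_on_eq_differentiable_at smooth_on3_def
        intro!: differentiable_imp_continuous_on)
qed

lemma smooth_on3_cong:
  "open U \<Longrightarrow> smooth_on3 U g \<Longrightarrow> (\<And>x. x \<in> U \<Longrightarrow> g x = g' x) \<Longrightarrow> smooth_on3 U g'"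
  unfolding smooth_on3_def using Ck_cong by blast

lemma smooth_on3_subset: "V \<subseteq> U \<Longrightarrow> smooth_on3 U g \<Longrightarrow> smooth_on3 V g"
  unfolding smooth_on3_def using Ck_subset by blast

lemma smooth_on3_const: "smooth_on3 U (\<lambda>x. c)"
  unfolding smooth_on3_def using Ck_const by blast

lemma smooth_on3_add:
  "open U \<Longrightarrow> smooth_on3 U f \<Longrightarrow> smooth_on3 U g \<Longrightarrow> smooth_on3 U (\<lambda>x. f x + g x)"
  unfolding smooth_on3_def using Ck_add by blast

lemma smooth_on3_bilinear:
  fixes f :: "real^3 \<Rightarrow> 'a::real_normed_vector" and g :: "real^3 \<Rightarrow> 'b::real_normed_vector"
    and prod :: "'a \<Rightarrow> 'b \<Rightarrow> 'c::real_normed_vector"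
  shows "bounded_bilinear prod \<Longrightarrow> open U \<Longrightarrow> smooth_on3 U f \<Longrightarrow> smooth_on3 U g
    \<Longrightarrow> smooth_on3 U (\<lambda>x. prod (f x) (g x))"
  unfolding smooth_on3_def using Ck_bilinear by blast

lemma smooth_on3_mult:
  fixes f g :: "real^3 \<Rightarrow> real"
  shows "open U \<Longrightarrow> smooth_on3 U f \<Longrightarrow> smooth_on3 U g \<Longrightarrow> smooth_on3 U (\<lambda>x. f x * g x)"
  using smooth_on3_bilinear[OF bounded_bilinear_mult] by blast

lemma smooth_on3_scaleR:
  fixes f :: "real^3 \<Rightarrow> real" and g :: "real^3 \<Rightarrow> 'a::real_normed_vector"
  shows "open U \<Longrightarrow> smooth_on3 U f \<Longrightarrow> smooth_on3 U g \<Longrightarrow> smooth_on3 U (\<lambda>x. f x *\<^sub>R g x)"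
  using smooth_on3_bilinear[OF bounded_bilinear_scaleR] by blast

lemma smooth_on3_inner:
  fixes f g :: "real^3 \<Rightarrow> 'a::real_inner"
  shows "open U \<Longrightarrow> smooth_on3 U f \<Longrightarrow> smooth_on3 U g \<Longrightarrow> smooth_on3 U (\<lambda>x. inner (f x) (g x))"
  using smooth_on3_bilinear[OF bounded_bilinear_inner] by blast

lemma smooth_on3_minus:
  fixes f :: "real^3 \<Rightarrow> 'a::real_normed_vector"
  assumes "open U" "smooth_on3 U f"
  shows "smooth_on3 U (\<lambda>x. - f x)"
  using smooth_on3_scaleR[OF assms(1) smooth_on3_const assms(2), of "-1"] by simp

lemma smooth_on3_diff:
  fixes f g :: "real^3 \<Rightarrow> 'a::real_normed_vector"
  assumes "open U" "smooth_on3 U f" "smooth_on3 U g"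
  shows "smooth_on3 U (\<lambda>x. f x - g x)"
  using smooth_on3_add[OF assms(1,2) smooth_on3_minus[OF assms(1,3)]] by simp

lemma smooth_on3_ln:
  fixes g :: "real^3 \<Rightarrow> real"
  shows "open U \<Longrightarrow> (\<And>x. x \<in> U \<Longrightarrow> g x > 0) \<Longrightarrow> smooth_on3 U g \<Longrightarrow> smooth_on3 U (\<lambda>x. ln (g x))"
  unfolding smooth_on3_def using Ck_ln by blast

section \<open>Symmetry of second partial derivatives\<close>

lemma has_vector_derivative_line:
  assumes "G differentiable (at (a + t *\<^sub>R w))"
  shows "((\<lambda>t. G (a + t *\<^sub>R w)) has_vector_derivative (\<Sum>j\<in>UNIV. w $ j *\<^sub>R pd j G (a + t *\<^sub>R w)))
    (at t within S)"
proof -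
  have "((\<lambda>t. a + t *\<^sub>R w) has_derivative (\<lambda>h. h *\<^sub>R w)) (at t within S)"
    by (rule derivative_eq_intros refl)+ simp
  from has_derivative_compose[OF this has_derivative_pd[OF assms]]
  show ?thesis
    unfolding has_vector_derivative_def by (simp add: o_def scaleR_sum_right)
qed

lemma has_vector_derivative_axis_line:
  assumes "G differentiable (at (a + t *\<^sub>R axis k 1))"
  shows "((\<lambda>t. G (a + t *\<^sub>R axis k 1)) has_vector_derivative pd k G (a + t *\<^sub>R axis k 1)) (at t within S)"
  using has_vector_derivative_line[OF assms] by (simp add: sum_axis_scaleR)

lemma has_integral_pd_axis_segment:
  fixes g :: "real^3 \<Rightarrow> 'a::banach"
  assumes "a \<le> b" and "\<And>\<sigma>. \<sigma> \<in> {a..b} \<Longrightarrow> g differentiable (at (y + \<sigma> *\<^sub>R axis i 1))"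
  shows "((\<lambda>\<sigma>. pd i g (y + \<sigma> *\<^sub>R axis i 1)) has_integral g (y + b *\<^sub>R axis i 1) - g (y + a *\<^sub>R axis i 1))
    {a..b}"
  using assms has_vector_derivative_axis_line by (intro fundamental_theorem_of_calculus) blast+

lemma has_vector_derivative_integral_axis:
  fixes h :: "real^3 \<Rightarrow> 'a::banach"
  assumes U: "open U" "Ck 1 U h" and d: "d > 0"
    and in_U: "\<And>\<sigma> t. \<sigma> \<in> {a..b} \<Longrightarrow> \<bar>t\<bar> \<le> d \<Longrightarrow> y + \<sigma> *\<^sub>R axis i 1 + t *\<^sub>R axis j 1 \<in> U"
  shows "((\<lambda>t. integral {a..b} (\<lambda>\<sigma>. h (y + \<sigma> *\<^sub>R axis i 1 + t *\<^sub>R axis j 1))) has_vector_derivative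
      integral {a..b} (\<lambda>\<sigma>. pd j h (y + \<sigma> *\<^sub>R axis i 1))) (at 0)"
proof -
  define T where "T = {-d<..<d}"
  have T: "open T" "convex T" "0 \<in> T" and T_le: "\<And>t. t \<in> T \<Longrightarrow> \<bar>t\<bar> \<le> d"
    using d by (auto simp: T_def)
  have hd: "h differentiable (at z)" if "z \<in> U" for z
    using Ck_imp_differentiable[OF U(1) U(2)[unfolded One_nat_def] that] .
  have hc: "continuous_on U h" and hdc: "continuous_on U (pd j h)"
    using U(2) by (auto simp: differentiable_imp_continuous_on)
  have "((\<lambda>t. integral (cbox a b) (\<lambda>\<sigma>. h (y + \<sigma> *\<^sub>R axis i 1 + t *\<^sub>R axis j 1))) has_vector_derivative
      integral (cbox a b) (\<lambda>\<sigma>. pd j h (y + \<sigma> *\<^sub>R axis i 1 + 0 *\<^sub>R axis j 1))) (at 0 within T)"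
  proof (rule leibniz_rule_vector_derivative[OF _ _ _ T(3,2)])
    fix t \<sigma> assume "t \<in> T" "\<sigma> \<in> cbox a b"
    then have "y + \<sigma> *\<^sub>R axis i 1 + t *\<^sub>R axis j 1 \<in> U"
      using in_U T_le by simp
    then show "((\<lambda>t. h (y + \<sigma> *\<^sub>R axis i 1 + t *\<^sub>R axis j 1)) has_vector_derivative
        pd j h (y + \<sigma> *\<^sub>R axis i 1 + t *\<^sub>R axis j 1)) (at t within T)"
      by (intro has_vector_derivative_axis_line hd)
  next
    fix t assume "t \<in> T"
    have "continuous_on (cbox a b) (\<lambda>\<sigma>. y + \<sigma> *\<^sub>R axis i 1 + t *\<^sub>R axis j 1)"
      by (intro continuous_intros)
    moreover have "(\<lambda>\<sigma>. y + \<sigma> *\<^sub>R axis i 1 + t *\<^sub>R axis j 1) ` cbox a b \<subseteq> U"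
      using in_U T_le \<open>t \<in> T\<close> by auto
    ultimately have "continuous_on (cbox a b) (\<lambda>\<sigma>. h (y + \<sigma> *\<^sub>R axis i 1 + t *\<^sub>R axis j 1))"
      by (rule continuous_on_compose2[OF hc])
    then show "(\<lambda>\<sigma>. h (y + \<sigma> *\<^sub>R axis i 1 + t *\<^sub>R axis j 1)) integrable_on cbox a b"
      by (rule integrable_continuous)
  next
    have "continuous_on (T \<times> cbox a b) (\<lambda>z. y + snd z *\<^sub>R axis i 1 + fst z *\<^sub>R axis j 1)"
      by (intro continuous_intros)
    moreover have "(\<lambda>z. y + snd z *\<^sub>R axis i 1 + fst z *\<^sub>R axis j 1) ` (T \<times> cbox a b) \<subseteq> U"
      using in_U T_le by auto
    ultimately show "continuous_on (T \<times> cbox a b) (\<lambda>(t, \<sigma>). pd j h (y + \<sigma> *\<^sub>R axis i 1 + t *\<^sub>R axis j 1))"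
      unfolding case_prod_beta by (rule continuous_on_compose2[OF hdc])
  qed
  then show ?thesis
    by (simp add: has_vector_derivative_within_open[OF T(3,1)])
qed

lemma pd_axis_difference_eq_integral:
  fixes g :: "real^3 \<Rightarrow> 'a::banach"
  assumes U: "open U" "Ck 2 U g" and d: "d > 0" and ab: "a \<le> b"
    and in_U: "\<And>\<sigma> t. \<sigma> \<in> {a..b} \<Longrightarrow> \<bar>t\<bar> \<le> d \<Longrightarrow> y + \<sigma> *\<^sub>R axis i 1 + t *\<^sub>R axis j 1 \<in> U"
  shows "pd j g (y + b *\<^sub>R axis i 1) - pd j g (y + a *\<^sub>R axis i 1)
    = integral {a..b} (\<lambda>\<sigma>. pd j (pd i g) (y + \<sigma> *\<^sub>R axis i 1))"
proof -
  have gd: "g differentiable (at z)" if "z \<in> U" for z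
    using Ck_imp_differentiable[OF U(1) U(2)[unfolded numeral_2_eq_2] that] .
  have g1: "Ck 1 U (pd i g)"
    using U(2) by (simp add: numeral_2_eq_2)
  have line: "((\<lambda>t. g (y + c *\<^sub>R axis i 1 + t *\<^sub>R axis j 1)) has_vector_derivative
      pd j g (y + c *\<^sub>R axis i 1)) (at 0)" if "c \<in> {a..b}" for c
    using has_vector_derivative_axis_line[of g "y + c *\<^sub>R axis i 1" 0 j UNIV] gd in_U[OF that, of 0] d
    by simp
  define \<Phi> where "\<Phi> t = g (y + b *\<^sub>R axis i 1 + t *\<^sub>R axis j 1) - g (y + a *\<^sub>R axis i 1 + t *\<^sub>R axis j 1)"
    for t
  have "(\<Phi> has_vector_derivative pd j g (y + b *\<^sub>R axis i 1) - pd j g (y + a *\<^sub>R axis i 1)) (at 0)"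
    unfolding \<Phi>_def using ab by (intro has_vector_derivative_diff line) auto
  moreover have "integral {a..b} (\<lambda>\<sigma>. pd i g (y + \<sigma> *\<^sub>R axis i 1 + t *\<^sub>R axis j 1)) = \<Phi> t"
    if "t \<in> {-d<..<d}" for t
  proof -
    have mem: "(y + t *\<^sub>R axis j 1) + \<sigma> *\<^sub>R axis i 1 \<in> U" if "\<sigma> \<in> {a..b}" for \<sigma>
      using in_U[OF that, of t] \<open>t \<in> {-d<..<d}\<close> by (simp add: algebra_simps abs_le_iff)
    have "((\<lambda>\<sigma>. pd i g ((y + t *\<^sub>R axis j 1) + \<sigma> *\<^sub>R axis i 1)) has_integral
        g ((y + t *\<^sub>R axis j 1) + b *\<^sub>R axis i 1) - g ((y + t *\<^sub>R axis j 1) + a *\<^sub>R axis i 1)) {a..b}"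
      by (rule has_integral_pd_axis_segment[OF ab]) (use gd mem in blast)
    then show ?thesis
      unfolding \<Phi>_def by (simp add: integral_unique algebra_simps)
  qed
  then have "(\<Phi> has_vector_derivative integral {a..b} (\<lambda>\<sigma>. pd j (pd i g) (y + \<sigma> *\<^sub>R axis i 1))) (at 0)"
    by (intro has_vector_derivative_transform_within_open[where S="{-d<..<d}",
          OF has_vector_derivative_integral_axis[OF U(1) g1 d in_U]]) (use d in auto)
  ultimately show ?thesis
    by (rule vector_derivative_unique_at)
qed

lemma has_vector_derivative_pd_along_axis:
  fixes g :: "real^3 \<Rightarrow> 'a::banach"
  assumes U: "open U" "Ck 2 U g" and d: "d > 0"
    and in_U: "\<And>\<sigma> t. \<bar>\<sigma>\<bar> \<le> d \<Longrightarrow> \<bar>t\<bar> \<le> d \<Longrightarrow> x + \<sigma> *\<^sub>R axis i 1 + t *\<^sub>R axis j 1 \<in> U"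
  shows "((\<lambda>s. pd j g (x + s *\<^sub>R axis i 1)) has_vector_derivative pd j (pd i g) x) (at 0)"
proof -
  define k where "k \<sigma> = pd j (pd i g) (x + \<sigma> *\<^sub>R axis i 1)" for \<sigma>
  have "continuous_on U (pd j (pd i g))"
    using U(2) by (simp add: numeral_2_eq_2)
  moreover have "continuous_on {-d..d} (\<lambda>\<sigma>. x + \<sigma> *\<^sub>R axis i 1)"
    by (intro continuous_intros)
  moreover have "(\<lambda>\<sigma>. x + \<sigma> *\<^sub>R axis i 1) ` {-d..d} \<subseteq> U"
    using in_U[where t=0] d by (auto simp: abs_le_iff)
  ultimately have "continuous_on {-d..d} k"
    unfolding k_def by (rule continuous_on_compose2)
  then have "((\<lambda>s. integral {-d..s} k) has_vector_derivative k 0) (at 0 within {-d..d})"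
    using d by (intro integral_has_vector_derivative) auto
  then have "((\<lambda>s. integral {-d..s} k) has_vector_derivative k 0) (at 0 within {-d<..<d})"
    by (rule has_vector_derivative_within_subset) auto
  moreover have "0 \<in> {-d<..<d}"
    using d by simp
  ultimately have "((\<lambda>s. integral {-d..s} k) has_vector_derivative k 0) (at 0)"
    by (metis has_vector_derivative_within_open open_greaterThanLessThan)
  then have I: "((\<lambda>s. integral {-d..s} k + pd j g (x + (-d) *\<^sub>R axis i 1)) has_vector_derivative k 0)
      (at 0)"
    by (subst has_vector_derivative_add_const)
  have eq: "integral {-d..s} k + pd j g (x + (-d) *\<^sub>R axis i 1) = pd j g (x + s *\<^sub>R axis i 1)"
    if "s \<in> {-d<..<d}" for s
  proof -
    have s: "-d \<le> s" using that by simp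
    have mem: "x + \<sigma> *\<^sub>R axis i 1 + t *\<^sub>R axis j 1 \<in> U" if "\<sigma> \<in> {-d..s}" "\<bar>t\<bar> \<le> d" for \<sigma> t
      using that \<open>s \<in> {-d<..<d}\<close> by (intro in_U) auto
    show ?thesis
      using pd_axis_difference_eq_integral[OF U d s mem] unfolding k_def by (simp add: algebra_simps)
  qed
  have "((\<lambda>s. pd j g (x + s *\<^sub>R axis i 1)) has_vector_derivative k 0) (at 0)"
    using d
    by (intro has_vector_derivative_transform_within_open[OF I open_greaterThanLessThan _ eq]) auto
  then show ?thesis
    by (simp add: k_def)
qed

lemma pd_commute:
  fixes g :: "real^3 \<Rightarrow> 'a::banach"
  assumes U: "open U" "Ck 2 U g" and x: "x \<in> U"
  shows "pd i (pd j g) x = pd j (pd i g) x"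
proof -
  obtain e where e: "e > 0" "ball x e \<subseteq> U"
    using U(1) x open_contains_ball by blast
  define d where "d = e / 3"
  have d: "d > 0" using e by (simp add: d_def)
  have in_U: "x + \<sigma> *\<^sub>R axis i 1 + t *\<^sub>R axis j 1 \<in> U" if "\<bar>\<sigma>\<bar> \<le> d" "\<bar>t\<bar> \<le> d" for \<sigma> t
  proof -
    have "norm (\<sigma> *\<^sub>R axis i (1::real) + t *\<^sub>R axis j 1) \<le> \<bar>\<sigma>\<bar> + \<bar>t\<bar>"
      using norm_triangle_ineq[of "\<sigma> *\<^sub>R axis i (1::real)" "t *\<^sub>R axis j 1"] by simp
    also have "\<dots> < e" using that d by (simp add: d_def)
    finally have "dist (x + (\<sigma> *\<^sub>R axis i 1 + t *\<^sub>R axis j 1)) x < e"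
      by (simp add: dist_norm)
    then show ?thesis
      using e(2) by (auto simp: dist_commute add.assoc)
  qed
  have "Ck 1 U (pd j g)"
    using U(2) by (simp add: numeral_2_eq_2)
  then have "pd j g differentiable (at x)"
    using Ck_imp_differentiable[OF U(1) _ x] by (simp only: One_nat_def)
  then have "((\<lambda>s. pd j g (x + s *\<^sub>R axis i 1)) has_vector_derivative pd i (pd j g) x) (at 0)"
    using has_vector_derivative_axis_line[of "pd j g" x 0 i UNIV] by simp
  moreover have "((\<lambda>s. pd j g (x + s *\<^sub>R axis i 1)) has_vector_derivative pd j (pd i g) x) (at 0)"
    using in_U by (rule has_vector_derivative_pd_along_axis[OF U d])
  ultimately show ?thesis
    by (rule vector_derivative_unique_at)
qed

lemma smooth_on3_pd_commute:
  fixes g :: "real^3 \<Rightarrow> 'a::banach"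
  shows "open U \<Longrightarrow> smooth_on3 U g \<Longrightarrow> x \<in> U \<Longrightarrow> pd i (pd j g) x = pd j (pd i g) x"
  unfolding smooth_on3_def using pd_commute by blast

section \<open>The Poincare lemma on a ball\<close>

lemma sum_scaleR_swap_symmetric:
  fixes P :: "'i \<Rightarrow> 'i \<Rightarrow> 'b::real_vector"
  assumes "\<And>i j. P i j = P j i"
  shows "(\<Sum>i\<in>I. v i *\<^sub>R (\<Sum>j\<in>I. w j *\<^sub>R P i j)) = (\<Sum>i\<in>I. w i *\<^sub>R (\<Sum>j\<in>I. v j *\<^sub>R P i j))"
proof -
  have "(\<Sum>i\<in>I. v i *\<^sub>R (\<Sum>j\<in>I. w j *\<^sub>R P i j)) = (\<Sum>i\<in>I. \<Sum>j\<in>I. (v i * w j) *\<^sub>R P i j)"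
    by (simp add: scaleR_sum_right)
  also have "\<dots> = (\<Sum>j\<in>I. \<Sum>i\<in>I. (v i * w j) *\<^sub>R P i j)"
    by (rule sum.swap)
  also have "\<dots> = (\<Sum>i\<in>I. w i *\<^sub>R (\<Sum>j\<in>I. v j *\<^sub>R P i j))"
    by (simp add: scaleR_sum_right assms mult.commute)
  finally show ?thesis .
qed

locale closed_form_on_ball =
  fixes F :: "3 \<Rightarrow> real^3 \<Rightarrow> 'b::banach" and x0 :: "real^3" and r :: real
  assumes Ck1_form: "\<And>i. Ck 1 (ball x0 r) (F i)"
    and closed: "\<And>i j y. y \<in> ball x0 r \<Longrightarrow> pd j (F i) y = pd i (F j) y"
begin

lemma differentiable_form: "y \<in> ball x0 r \<Longrightarrow> F i differentiable (at y)"
  using Ck_imp_differentiable[OF open_ball Ck1_form[unfolded One_nat_def]] .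

lemma continuous_on_form: "continuous_on (ball x0 r) (F i)"
  using Ck1_form by (simp add: differentiable_imp_continuous_on)

lemma continuous_on_pd_form: "continuous_on (ball x0 r) (pd j (F i))"
  using Ck1_form by simp

lemma radial_point_in_ball: "x \<in> ball x0 r \<Longrightarrow> t \<in> {0..1} \<Longrightarrow> x0 + t *\<^sub>R (x - x0) \<in> ball x0 r"
  using mult_left_le_one_le[of "norm (x - x0)" "\<bar>t\<bar>"]
  by (auto simp: dist_norm norm_minus_commute)

text \<open>The pull-back of the form along the segment from x0 to x; G x will be its integral over [0,1].\<close>
definition radial_integrand :: "real^3 \<Rightarrow> real \<Rightarrow> 'b" where
  "radial_integrand x t = (\<Sum>i\<in>UNIV. (x - x0) $ i *\<^sub>R F i (x0 + t *\<^sub>R (x - x0)))"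

definition radial_integrand_deriv :: "real^3 \<Rightarrow> real \<Rightarrow> real^3 \<Rightarrow> 'b" where
  "radial_integrand_deriv x t v = (\<Sum>i\<in>UNIV. v $ i *\<^sub>R F i (x0 + t *\<^sub>R (x - x0))
      + (x - x0) $ i *\<^sub>R (t *\<^sub>R (\<Sum>j\<in>UNIV. v $ j *\<^sub>R pd j (F i) (x0 + t *\<^sub>R (x - x0)))))"

lemma bounded_linear_radial_integrand_deriv: "bounded_linear (radial_integrand_deriv x t)"
  unfolding radial_integrand_deriv_def[abs_def]
  by (intro bounded_linear_intros bounded_linear_vec_nth)

lemma has_derivative_radial_integrand:
  assumes "x \<in> ball x0 r" "t \<in> {0..1}"
  shows "((\<lambda>x. radial_integrand x t) has_derivative radial_integrand_deriv x t) (at x within S)"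
proof -
  let ?y = "x0 + t *\<^sub>R (x - x0)"
  have "((\<lambda>x. x0 + t *\<^sub>R (x - x0)) has_derivative (\<lambda>v. t *\<^sub>R v)) (at x within S)"
    by (rule derivative_eq_intros refl)+ (simp add: algebra_simps)
  from has_derivative_compose[OF this has_derivative_pd[OF differentiable_form]]
  have "((\<lambda>x. F i (x0 + t *\<^sub>R (x - x0))) has_derivative
      (\<lambda>v. \<Sum>j\<in>UNIV. (t *\<^sub>R v) $ j *\<^sub>R pd j (F i) ?y)) (at x within S)" for i
    using radial_point_in_ball[OF assms] by (simp add: o_def)
  moreover have "((\<lambda>x. (x - x0) $ i) has_derivative (\<lambda>v. v $ i)) (at x within S)" for i
  proof -
    have "((\<lambda>x. x $ i - x0 $ i) has_derivative (\<lambda>v. v $ i - 0)) (at x within S)"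
      by (intro has_derivative_diff bounded_linear_imp_has_derivative bounded_linear_vec_nth
          has_derivative_const)
    then show ?thesis
      by simp
  qed
  ultimately have "((\<lambda>x. radial_integrand x t) has_derivative
      (\<lambda>v. \<Sum>i\<in>UNIV. (x - x0) $ i *\<^sub>R (\<Sum>j\<in>UNIV. (t *\<^sub>R v) $ j *\<^sub>R pd j (F i) ?y) + v $ i *\<^sub>R F i ?y))
      (at x within S)"
    unfolding radial_integrand_def by (intro has_derivative_sum has_derivative_scaleR)
  then show ?thesis
    by (simp add: radial_integrand_deriv_def[abs_def] scaleR_sum_right add.commute mult.left_commute)
qed

lemma continuous_on_radial_integrand_deriv:
  "continuous_on (ball x0 r \<times> {0..1}) (\<lambda>(x, t). Blinfun (radial_integrand_deriv x t))"
proof (rule continuous_on_blinfun_componentwise)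
  fix b :: "real^3" assume "b \<in> Basis"
  then obtain k where b: "b = axis k 1"
    by (auto simp: Basis_vec_def)
  let ?y = "\<lambda>z. x0 + snd z *\<^sub>R (fst z - x0)"
  have cont_y: "continuous_on S ?y" for S
    by (intro continuous_intros)
  have y_in: "?y ` (ball x0 r \<times> {0..1}) \<subseteq> ball x0 r"
    using radial_point_in_ball by auto
  have "continuous_on (ball x0 r \<times> {0..1}) (\<lambda>z. F k (?y z) +
      (\<Sum>i\<in>UNIV. (fst z - x0) $ i *\<^sub>R (snd z *\<^sub>R pd k (F i) (?y z))))"
    by (intro continuous_intros continuous_on_compose2[OF continuous_on_form cont_y y_in]
        continuous_on_compose2[OF continuous_on_pd_form cont_y y_in])
  moreover have "Blinfun (radial_integrand_deriv x t) b
      = F k (x0 + t *\<^sub>R (x - x0)) + (\<Sum>i\<in>UNIV. (x - x0) $ i *\<^sub>R (t *\<^sub>R pd k (F i) (x0 + t *\<^sub>R (x - x0))))"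
    for x t
    by (simp add: bounded_linear_Blinfun_apply[OF bounded_linear_radial_integrand_deriv]
        radial_integrand_deriv_def b sum_axis_scaleR sum.distrib)
  ultimately show "continuous_on (ball x0 r \<times> {0..1})
      (\<lambda>z. (case z of (x, t) \<Rightarrow> Blinfun (radial_integrand_deriv x t)) b)"
    by (simp add: case_prod_beta)
qed

text \<open>This is where closedness enters: the t-derivative of t F(x0 + t (x - x0)) v is the integrand.\<close>
lemma has_integral_radial_integrand_deriv:
  assumes x: "x \<in> ball x0 r"
  shows "((\<lambda>t. radial_integrand_deriv x t v) has_integral (\<Sum>i\<in>UNIV. v $ i *\<^sub>R F i x)) {0..1}"
proof -
  define \<Psi> where "\<Psi> t = (\<Sum>i\<in>UNIV. v $ i *\<^sub>R F i (x0 + t *\<^sub>R (x - x0)))" for t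
  have "((\<lambda>t. t *\<^sub>R \<Psi> t) has_vector_derivative radial_integrand_deriv x t v) (at t within {0..1})"
    if t: "t \<in> {0..1}" for t
  proof -
    let ?y = "x0 + t *\<^sub>R (x - x0)"
    have y: "?y \<in> ball x0 r"
      using radial_point_in_ball[OF x t] .
    have "(\<Psi> has_vector_derivative
        (\<Sum>i\<in>UNIV. v $ i *\<^sub>R (\<Sum>j\<in>UNIV. (x - x0) $ j *\<^sub>R pd j (F i) ?y))) (at t within {0..1})"
      unfolding \<Psi>_def using differentiable_form[OF y]
      by (intro has_vector_derivative_sum
          bounded_linear.has_vector_derivative[OF bounded_linear_scaleR_right]
          has_vector_derivative_line)
    then have "((\<lambda>t. t *\<^sub>R \<Psi> t) has_vector_derivative
        t *\<^sub>R (\<Sum>i\<in>UNIV. v $ i *\<^sub>R (\<Sum>j\<in>UNIV. (x - x0) $ j *\<^sub>R pd j (F i) ?y)) + 1 *\<^sub>R \<Psi> t)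
        (at t within {0..1})"
      by (rule has_vector_derivative_scaleR[OF DERIV_ident])
    moreover have "(\<Sum>i\<in>UNIV. v $ i *\<^sub>R (\<Sum>j\<in>UNIV. (x - x0) $ j *\<^sub>R pd j (F i) ?y))
        = (\<Sum>i\<in>UNIV. (x - x0) $ i *\<^sub>R (\<Sum>j\<in>UNIV. v $ j *\<^sub>R pd j (F i) ?y))"
      using closed[OF y] by (intro sum_scaleR_swap_symmetric) auto
    moreover have "t *\<^sub>R (\<Sum>i\<in>UNIV. (x - x0) $ i *\<^sub>R (\<Sum>j\<in>UNIV. v $ j *\<^sub>R pd j (F i) ?y)) + 1 *\<^sub>R \<Psi> t
        = radial_integrand_deriv x t v"
      unfolding radial_integrand_deriv_def \<Psi>_def
      by (simp add: sum.distrib scaleR_sum_right add.commute mult_ac)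
    ultimately show ?thesis
      by simp
  qed
  then have "((\<lambda>t. radial_integrand_deriv x t v) has_integral 1 *\<^sub>R \<Psi> 1 - 0 *\<^sub>R \<Psi> 0) {0..1}"
    by (intro fundamental_theorem_of_calculus) auto
  then show ?thesis
    by (simp add: \<Psi>_def)
qed

lemma continuous_on_radial_integrand: "x \<in> ball x0 r \<Longrightarrow> continuous_on {0..1} (radial_integrand x)"
proof -
  assume x: "x \<in> ball x0 r"
  have "continuous_on {0..1} (\<lambda>t. x0 + t *\<^sub>R (x - x0))"
    by (intro continuous_intros)
  moreover have "(\<lambda>t. x0 + t *\<^sub>R (x - x0)) ` {0..1} \<subseteq> ball x0 r"
    using radial_point_in_ball[OF x] by auto
  ultimately have "continuous_on {0..1} (\<lambda>t. F i (x0 + t *\<^sub>R (x - x0)))" for i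
    by (rule continuous_on_compose2[OF continuous_on_form])
  then show ?thesis
    unfolding radial_integrand_def[abs_def] by (intro continuous_intros)
qed

lemma blinfun_integral_radial_integrand_deriv:
  assumes x: "x \<in> ball x0 r"
  shows "blinfun_apply (integral {0..1} (\<lambda>t. Blinfun (radial_integrand_deriv x t)))
    = (\<lambda>v. \<Sum>i\<in>UNIV. v $ i *\<^sub>R F i x)"
proof
  fix v
  have "continuous_on {0..1} (\<lambda>t. (x, t))"
    by (intro continuous_intros)
  moreover have "(\<lambda>t. (x, t)) ` {0..1} \<subseteq> ball x0 r \<times> {0..1}"
    using x by auto
  ultimately have "continuous_on {0..1} (\<lambda>t. Blinfun (radial_integrand_deriv x t))"
    using continuous_on_compose2[OF continuous_on_radial_integrand_deriv] by fastforce
  then have "(\<lambda>t. Blinfun (radial_integrand_deriv x t)) integrable_on {0..1}"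
    by (rule integrable_continuous_real)
  from integral_linear[OF this bounded_bilinear.bounded_linear_left[OF bounded_bilinear_blinfun_apply]]
  have "blinfun_apply (integral {0..1} (\<lambda>t. Blinfun (radial_integrand_deriv x t))) v
      = integral {0..1} (\<lambda>t. radial_integrand_deriv x t v)"
    by (simp add: o_def bounded_linear_Blinfun_apply[OF bounded_linear_radial_integrand_deriv])
  also have "\<dots> = (\<Sum>i\<in>UNIV. v $ i *\<^sub>R F i x)"
    using has_integral_radial_integrand_deriv[OF x] by (rule integral_unique)
  finally show "blinfun_apply (integral {0..1} (\<lambda>t. Blinfun (radial_integrand_deriv x t))) v
      = (\<Sum>i\<in>UNIV. v $ i *\<^sub>R F i x)" .
qed

theorem exists_potential:
  "\<exists>G. \<forall>x\<in>ball x0 r. (G has_derivative (\<lambda>v. \<Sum>i\<in>UNIV. v $ i *\<^sub>R F i x)) (at x)"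
proof -
  define G where "G x = integral (cbox 0 1) (radial_integrand x)" for x
  have "(G has_derivative (\<lambda>v. \<Sum>i\<in>UNIV. v $ i *\<^sub>R F i x)) (at x)" if x: "x \<in> ball x0 r" for x
  proof -
    have "(G has_derivative
        blinfun_apply (integral (cbox 0 1) (\<lambda>t. Blinfun (radial_integrand_deriv x t))))
        (at x within ball x0 r)"
      unfolding G_def
    proof (rule leibniz_rule[OF _ _ _ x convex_ball])
      show "((\<lambda>x. radial_integrand x t) has_derivative
          blinfun_apply (Blinfun (radial_integrand_deriv x t)))
          (at x within ball x0 r)" if "x \<in> ball x0 r" "t \<in> cbox 0 1" for x t
        using has_derivative_radial_integrand that
        by (simp add: bounded_linear_Blinfun_apply[OF bounded_linear_radial_integrand_deriv])
      show "radial_integrand x integrable_on cbox 0 1" if "x \<in> ball x0 r" for x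
        using continuous_on_radial_integrand[OF that] by (simp add: integrable_continuous_real)
      show "continuous_on (ball x0 r \<times> cbox 0 1) (\<lambda>(x, t). Blinfun (radial_integrand_deriv x t))"
        using continuous_on_radial_integrand_deriv by simp
    qed
    then show ?thesis
      using at_within_open[OF x open_ball] blinfun_integral_radial_integrand_deriv[OF x] by simp
  qed
  then show ?thesis by blast
qed

end

lemma smooth_potential_on_ball:
  fixes F :: "3 \<Rightarrow> real^3 \<Rightarrow> 'b::banach"
  assumes F: "\<And>i. smooth_on3 (ball x0 r) (F i)"
    and closed: "\<And>i j y. y \<in> ball x0 r \<Longrightarrow> pd j (F i) y = pd i (F j) y"
  shows "\<exists>G. smooth_on3 (ball x0 r) G \<and> (\<forall>i. \<forall>x\<in>ball x0 r. pd i G x = F i x)"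
proof -
  interpret closed_form_on_ball F x0 r
    using F closed by unfold_locales (simp add: smooth_on3_def)
  obtain G where G: "\<And>x. x \<in> ball x0 r \<Longrightarrow> (G has_derivative (\<lambda>v. \<Sum>i\<in>UNIV. v $ i *\<^sub>R F i x)) (at x)"
    using exists_potential by blast
  have pd_G: "pd i G x = F i x" if "x \<in> ball x0 r" for i x
    using pd_has_derivative[OF G[OF that]] by (simp add: sum_axis_scaleR)
  have "smooth_on3 (ball x0 r) G"
  proof (rule smooth_on3_intro[OF open_ball])
    show "G differentiable (at x)" if "x \<in> ball x0 r" for x
      using G[OF that] by (auto simp: differentiable_def)
    show "smooth_on3 (ball x0 r) (pd i G)" for i
      using pd_G by (intro smooth_on3_cong[OF open_ball F]) auto
  qed
  with pd_G show ?thesis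
    by blast
qed

section \<open>Triply orthogonal systems and their Combescure transforms\<close>

definition pd_ln_lame :: "(real^3 \<Rightarrow> real^3) \<Rightarrow> 3 \<Rightarrow> 3 \<Rightarrow> real^3 \<Rightarrow> real" where
  "pd_ln_lame f i j = pd j (\<lambda>y. ln (lame f i y))"

locale triply_orthogonal_system =
  fixes U :: "(real^3) set" and f :: "real^3 \<Rightarrow> real^3"
  assumes open_domain: "open U" and triply_orthogonal: "triply_orthogonal U f"
begin

lemma smooth: "smooth_on3 U f"
  using triply_orthogonal by (simp add: triply_orthogonal_def)

lemma det_frame_nonzero: "x \<in> U \<Longrightarrow> det (\<chi> i. pd i f x) \<noteq> 0"
  using triply_orthogonal by (simp add: triply_orthogonal_def)

lemma frame_orthogonal: "x \<in> U \<Longrightarrow> i \<noteq> j \<Longrightarrow> inner (pd i f x) (pd j f x) = 0"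
  using triply_orthogonal by (simp add: triply_orthogonal_def)

lemma orthogonal_to_frame_eq_0:
  assumes x: "x \<in> U" and orth: "\<And>m. inner v (pd m f x) = 0"
  shows "v = 0"
proof -
  obtain B where "B ** (\<chi> i. pd i f x) = mat 1"
    using det_frame_nonzero[OF x] invertible_left_inverse by (auto simp: invertible_det_nz)
  moreover have "(\<chi> i. pd i f x) *v v = 0"
    by (simp add: vec_eq_iff matrix_vector_mul_component orth inner_commute)
  ultimately show ?thesis
    using matrix_left_invertible_ker by blast
qed

lemma frame_nonzero: "x \<in> U \<Longrightarrow> pd i f x \<noteq> 0"
proof
  assume "x \<in> U" "pd i f x = 0"
  then have "row i (\<chi> i. pd i f x) = 0"
    by (simp add: row_def vec_eq_iff)
  then have "det (\<chi> i. pd i f x) = 0"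
    by (rule det_zero_row(1))
  with det_frame_nonzero \<open>x \<in> U\<close> show False
    by blast
qed

lemma lame_pos: "x \<in> U \<Longrightarrow> lame f i x > 0"
  using frame_nonzero by (simp add: lame_def)

lemma smooth_frame: "smooth_on3 U (pd i f)"
  using smooth smooth_on3_pd by blast

lemma differentiable_frame: "x \<in> U \<Longrightarrow> pd i f differentiable (at x)"
  using smooth_on3_imp_differentiable[OF open_domain smooth_frame] .

lemma pd_frame_commute: "x \<in> U \<Longrightarrow> pd i (pd j f) x = pd j (pd i f) x"
  using smooth_on3_pd_commute[OF open_domain smooth] .

lemma ln_lame_eq: "x \<in> U \<Longrightarrow> ln (lame f i x) = ln (inner (pd i f x) (pd i f x)) / 2"
  using frame_nonzero[of x i] by (simp add: lame_def ln_sqrt norm_eq_sqrt_inner)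

lemma smooth_ln_lame: "smooth_on3 U (\<lambda>y. ln (lame f i y))"
proof -
  have "smooth_on3 U (\<lambda>y. ln (inner (pd i f y) (pd i f y)))"
    using frame_nonzero
    by (intro smooth_on3_ln[OF open_domain] smooth_on3_inner[OF open_domain smooth_frame smooth_frame])
      auto
  then have "smooth_on3 U (\<lambda>y. ln (inner (pd i f y) (pd i f y)) * (1 / 2))"
    by (rule smooth_on3_mult[OF open_domain _ smooth_on3_const])
  then show ?thesis
    by (rule smooth_on3_cong[OF open_domain]) (simp add: ln_lame_eq)
qed

lemma smooth_pd_ln_lame: "smooth_on3 U (pd_ln_lame f i j)"
  unfolding pd_ln_lame_def using smooth_ln_lame smooth_on3_pd by blast

lemma differentiable_pd_ln_lame: "x \<in> U \<Longrightarrow> pd_ln_lame f i j differentiable (at x)"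
  using smooth_on3_imp_differentiable[OF open_domain smooth_pd_ln_lame] .

lemma pd_ln_lame_commute: "x \<in> U \<Longrightarrow> pd k (pd_ln_lame f i j) x = pd j (pd_ln_lame f i k) x"
  unfolding pd_ln_lame_def using smooth_on3_pd_commute[OF open_domain smooth_ln_lame] .

lemma inner_pd_frame_same:
  assumes x: "x \<in> U"
  shows "inner (pd j (pd i f) x) (pd i f x) = pd_ln_lame f i j x * inner (pd i f x) (pd i f x)"
proof -
  let ?n = "\<lambda>y. inner (pd i f y) (pd i f y)"
  have n_pos: "?n x > 0" and n_diff: "?n differentiable (at x)"
    using frame_nonzero[OF x] differentiable_frame[OF x] by simp_all
  have "pd_ln_lame f i j x = pd j (\<lambda>y. ln (?n y) / 2) x"
    unfolding pd_ln_lame_def by (rule pd_cong_open[OF open_domain x]) (simp add: ln_lame_eq)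
  also have "\<dots> = pd j (\<lambda>y. ln (?n y)) x / 2"
    using pd_mult[OF differentiable_ln[OF n_diff n_pos] differentiable_const[of "1 / 2"], of j]
    by (simp add: pd_const)
  also have "\<dots> = inner (pd j (pd i f) x) (pd i f x) / ?n x"
    using pd_inner[OF differentiable_frame[OF x] differentiable_frame[OF x], of j]
    by (simp add: pd_ln[OF n_diff n_pos] inner_commute)
  finally show ?thesis
    using n_pos by (simp add: field_simps)
qed

text \<open>Differentiating inner (pd i f) (pd j f) = 0 shows that inner (pd k (pd i f)) (pd j f) is
  antisymmetric in (i, j); it is symmetric in (k, i), and for distinct indices the two symmetries
  force it to vanish.\<close>
lemma inner_pd_frame_distinct:
  assumes x: "x \<in> U" and ijk: "i \<noteq> j" "j \<noteq> k" "i \<noteq> k"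
  shows "inner (pd j (pd i f) x) (pd k f x) = 0"
proof -
  define S where "S a b c = inner (pd a (pd b f) x) (pd c f x)" for a b c
  have sym: "S a b c = S b a c" for a b c
    unfolding S_def using pd_frame_commute[OF x] by simp
  have anti: "S a b c = - S a c b" if "b \<noteq> c" for a b c
  proof -
    have "pd a (\<lambda>y. inner (pd b f y) (pd c f y)) x = pd a (\<lambda>y. 0) x"
      using frame_orthogonal that by (intro pd_cong_open[OF open_domain x]) auto
    then show ?thesis
      unfolding S_def
      by (simp add: pd_inner[OF differentiable_frame[OF x] differentiable_frame[OF x]] pd_const
          inner_commute eq_neg_iff_add_eq_0)
  qed
  have "S j i k = - S j k i" using anti[of i k j] ijk by simp
  also have "\<dots> = - S k j i" using sym[of j k i] by simp
  also have "\<dots> = S k i j" using anti[of j i k] ijk by simp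
  also have "\<dots> = S i k j" using sym[of k i j] by simp
  also have "\<dots> = - S i j k" using anti[of k j i] ijk by simp
  also have "\<dots> = - S j i k" using sym[of i j k] by simp
  finally show ?thesis
    unfolding S_def by simp
qed

theorem darboux:
  assumes x: "x \<in> U" and ij: "i \<noteq> j"
  shows "pd j (pd i f) x = pd_ln_lame f i j x *\<^sub>R pd i f x + pd_ln_lame f j i x *\<^sub>R pd j f x"
proof -
  let ?w = "pd j (pd i f) x - (pd_ln_lame f i j x *\<^sub>R pd i f x + pd_ln_lame f j i x *\<^sub>R pd j f x)"
  have "inner ?w (pd m f x) = 0" for m
  proof -
    consider "m = i" | "m = j" | "m \<noteq> i" "m \<noteq> j" by blast
    then show ?thesis
    proof cases
      case 1
      then show ?thesis
        using inner_pd_frame_same[OF x, of j i] frame_orthogonal[OF x, of j i] ij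
        by (simp add: inner_diff_left inner_add_left)
    next
      case 2
      then show ?thesis
        using inner_pd_frame_same[OF x, of i j] frame_orthogonal[OF x, of i j] ij
          pd_frame_commute[OF x, of j i]
        by (simp add: inner_diff_left inner_add_left)
    next
      case 3
      then show ?thesis
        using inner_pd_frame_distinct[OF x ij, of m] frame_orthogonal[OF x, of i m]
          frame_orthogonal[OF x, of j m]
        by (simp add: inner_diff_left inner_add_left)
    qed
  qed
  then have "?w = 0"
    by (rule orthogonal_to_frame_eq_0[OF x])
  then show ?thesis by simp
qed

lemma inner_pd_frame_same':
  "x \<in> U \<Longrightarrow> inner (pd i (pd j f) x) (pd i f x) = pd_ln_lame f i j x * inner (pd i f x) (pd i f x)"
  using inner_pd_frame_same[of x j i] pd_frame_commute[of x i j] by simp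

lemma pd_darboux:
  assumes x: "x \<in> U" and ij: "i \<noteq> j"
  shows "pd k (pd i (pd j f)) x
    = (pd k (pd_ln_lame f j i) x *\<^sub>R pd j f x + pd_ln_lame f j i x *\<^sub>R pd k (pd j f) x)
      + (pd k (pd_ln_lame f i j) x *\<^sub>R pd i f x + pd_ln_lame f i j x *\<^sub>R pd k (pd i f) x)"
proof -
  have "pd k (pd i (pd j f)) x
      = pd k (\<lambda>y. pd_ln_lame f j i y *\<^sub>R pd j f y + pd_ln_lame f i j y *\<^sub>R pd i f y) x"
    using darboux ij by (intro pd_cong_open[OF open_domain x]) auto
  then show ?thesis
    by (simp add: pd_add pd_scaleR differentiable_pd_ln_lame differentiable_frame x)
qed

theorem lame_equation:
  assumes x: "x \<in> U" and ijk: "i \<noteq> j" "j \<noteq> k" "i \<noteq> k"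
  shows "pd k (pd_ln_lame f i j) x = pd_ln_lame f j k x * pd_ln_lame f i j x
    + pd_ln_lame f k j x * pd_ln_lame f i k x - pd_ln_lame f i k x * pd_ln_lame f i j x"
proof -
  let ?a = "pd_ln_lame f" and ?n = "inner (pd i f x) (pd i f x)"
  have n: "?n > 0"
    using frame_nonzero[OF x] by simp
  have "inner (pd k (pd i (pd j f)) x) (pd i f x) = pd k (?a i j) x * ?n + ?a i j x * (?a i k x * ?n)"
    using pd_darboux[OF x, of i j k] inner_pd_frame_distinct[OF x, of j k i]
      inner_pd_frame_same[OF x, of k i]
      frame_orthogonal[OF x, of j i] ijk
    by (simp add: inner_add_left)
  moreover have "inner (pd i (pd k (pd j f)) x) (pd i f x)
      = ?a j k x * (?a i j x * ?n) + ?a k j x * (?a i k x * ?n)"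
    using pd_darboux[OF x, of k j i] inner_pd_frame_same'[OF x, of i j]
      inner_pd_frame_same'[OF x, of i k]
      frame_orthogonal[OF x, of j i] frame_orthogonal[OF x, of k i] ijk
    by (simp add: inner_add_left)
  moreover have "pd k (pd i (pd j f)) x = pd i (pd k (pd j f)) x"
    using smooth_on3_pd_commute[OF open_domain smooth_frame x] .
  ultimately have
    "(pd k (?a i j) x - (?a j k x * ?a i j x + ?a k j x * ?a i k x - ?a i k x * ?a i j x)) * ?n = 0"
    by (simp add: algebra_simps)
  with n show ?thesis
    by simp
qed

lemma pd_pd_ln_lame_mult:
  assumes x: "x \<in> U"
  shows "pd p (pd q (\<lambda>y. ln (lame f p y * lame f q y))) x
    = pd p (pd_ln_lame f p q) x + pd p (pd_ln_lame f q q) x"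
proof -
  have "pd q (\<lambda>y. ln (lame f p y * lame f q y)) y = pd_ln_lame f p q y + pd_ln_lame f q q y"
    if y: "y \<in> U" for y
  proof -
    have "pd q (\<lambda>y. ln (lame f p y * lame f q y)) y = pd q (\<lambda>y. ln (lame f p y) + ln (lame f q y)) y"
      using lame_pos by (intro pd_cong_open[OF open_domain y]) (simp add: ln_mult_pos)
    then show ?thesis
      using smooth_on3_imp_differentiable[OF open_domain smooth_ln_lame y]
      by (simp add: pd_add pd_ln_lame_def)
  qed
  then have "pd p (pd q (\<lambda>y. ln (lame f p y * lame f q y))) x
      = pd p (\<lambda>y. pd_ln_lame f p q y + pd_ln_lame f q q y) x"
    by (intro pd_cong_open[OF open_domain x])
  then show ?thesis
    by (simp add: pd_add differentiable_pd_ln_lame x)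
qed

lemma combescure_coefficient_differentiable:
  assumes V: "open V" "V \<subseteq> U" "smooth_on3 V fh" and fh: "\<And>y. y \<in> V \<Longrightarrow> pd i fh y = h y *\<^sub>R pd i f y"
    and x: "x \<in> V"
  shows "h differentiable (at x)"
proof (rule differentiable_cong_open[OF V(1) x])
  show "inner (pd i fh y) (pd i f y) / inner (pd i f y) (pd i f y) = h y" if "y \<in> V" for y
    using fh[OF that] frame_nonzero[of y i] V(2) that by auto
  have "pd i fh differentiable (at x)"
    using smooth_on3_imp_differentiable[OF V(1) smooth_on3_pd[OF V(3)] x] .
  then show "(\<lambda>y. inner (pd i fh y) (pd i f y) / inner (pd i f y) (pd i f y)) differentiable (at x)"
    using differentiable_frame[of x i] frame_nonzero[of x i] V(2) x by auto
qed

lemma triply_orthogonal_combescure: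
  assumes V: "open V" "V \<subseteq> U" "smooth_on3 V fh"
    and fh: "\<And>i y. y \<in> V \<Longrightarrow> pd i fh y = h i y *\<^sub>R pd i f y" and h: "\<And>i y. y \<in> V \<Longrightarrow> h i y \<noteq> 0"
  shows "triply_orthogonal V fh"
  unfolding triply_orthogonal_def
proof (intro conjI ballI allI impI)
  fix x assume x: "x \<in> V"
  have "(\<chi> i. pd i fh x) = (\<chi> i. h i x *s pd i f x)"
    by (simp add: vec_eq_iff fh[OF x] scalar_mult_eq_scaleR)
  then have "det (\<chi> i. pd i fh x) = prod (\<lambda>i. h i x) UNIV * det (\<chi> i. pd i f x)"
    by (simp add: det_rows_mul)
  then show "det (\<chi> i. pd i fh x) \<noteq> 0"
    using h[OF x] det_frame_nonzero[of x] V(2) x by (auto simp: prod_zero_iff)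
  show "inner (pd i fh x) (pd j fh x) = 0" if "i \<noteq> j" for i j
    using frame_orthogonal[OF _ that, of x] V(2) x by (simp add: fh[OF x] subset_iff)
qed (use V(3) in simp)

text \<open>The right-hand side is symmetric in i and j: the form sum_i h_i (pd i f) dx_i is closed.\<close>
lemma pd_combescure_form:
  assumes x: "x \<in> U" and ij: "i \<noteq> j" and h: "h i differentiable (at x)"
    and h_sys: "pd j (h i) x = (h j x - h i x) * pd_ln_lame f i j x"
  shows "pd j (\<lambda>y. h i y *\<^sub>R pd i f y) x
    = (h j x * pd_ln_lame f i j x) *\<^sub>R pd i f x + (h i x * pd_ln_lame f j i x) *\<^sub>R pd j f x"
proof -
  have "pd j (\<lambda>y. h i y *\<^sub>R pd i f y) x = pd j (h i) x *\<^sub>R pd i f x + h i x *\<^sub>R pd j (pd i f) x"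
    by (rule pd_scaleR[OF h differentiable_frame[OF x]])
  also have "\<dots> = ((h j x - h i x) * pd_ln_lame f i j x) *\<^sub>R pd i f x
      + h i x *\<^sub>R (pd_ln_lame f i j x *\<^sub>R pd i f x + pd_ln_lame f j i x *\<^sub>R pd j f x)"
    using h_sys darboux[OF x ij] by simp
  also have "\<dots> = (h j x * pd_ln_lame f i j x) *\<^sub>R pd i f x + (h i x * pd_ln_lame f j i x) *\<^sub>R pd j f x"
    by (simp add: algebra_simps)
  finally show ?thesis .
qed

theorem exists_combescure_transform:
  assumes B: "ball x0 r \<subseteq> U"
    and h: "\<And>i. smooth_on3 (ball x0 r) (h i)" "\<And>i y. y \<in> ball x0 r \<Longrightarrow> h i y \<noteq> 0"
    and h_sys: "\<And>i j y. y \<in> ball x0 r \<Longrightarrow> i \<noteq> j \<Longrightarrow> pd j (h i) y = (h j y - h i y) * pd_ln_lame f i j y"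
  shows "\<exists>fh. triply_orthogonal (ball x0 r) fh \<and> (\<forall>i. \<forall>y\<in>ball x0 r. pd i fh y = h i y *\<^sub>R pd i f y)"
proof -
  have "smooth_on3 (ball x0 r) (\<lambda>y. h i y *\<^sub>R pd i f y)" for i
    using smooth_on3_subset[OF B smooth_frame] by (intro smooth_on3_scaleR[OF open_ball h(1)])
  moreover have "pd j (\<lambda>y. h i y *\<^sub>R pd i f y) y = pd i (\<lambda>y. h j y *\<^sub>R pd j f y) y"
    if y: "y \<in> ball x0 r" for i j y
  proof (cases "i = j")
    case False
    have "h k differentiable (at y)" for k
      using smooth_on3_imp_differentiable[OF open_ball h(1) y] .
    then show ?thesis
      using pd_combescure_form[of y i j h] pd_combescure_form[of y j i h] h_sys[OF y] False y B
      by (auto simp: add.commute)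
  qed simp
  ultimately obtain fh where "smooth_on3 (ball x0 r) fh"
    and fh: "\<And>i y. y \<in> ball x0 r \<Longrightarrow> pd i fh y = h i y *\<^sub>R pd i f y"
    using smooth_potential_on_ball[of x0 r "\<lambda>i y. h i y *\<^sub>R pd i f y"] by blast
  then have "triply_orthogonal (ball x0 r) fh"
    using B h(2) by (intro triply_orthogonal_combescure[OF open_ball]) auto
  with fh show ?thesis
    by blast
qed

end

section \<open>Combescure transforms induced by the functions phi_m\<close>

lemma numeral_3_cycle: "(4::3) = 1" "(5::3) = 2"
  by simp_all

lemma add_3_cycle:
  "(i::3) + 2 + 1 = i" "(i::3) + 1 + 2 = i" "(i::3) + 1 + 1 = i + 2" "(i::3) + 2 + 2 = i + 1"
  by simp_all

definition phi_induced_coefficients ::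
  "(real^3) set \<Rightarrow> (real^3 \<Rightarrow> real^3) \<Rightarrow> (3 \<Rightarrow> real^3 \<Rightarrow> real) \<Rightarrow> (3 \<Rightarrow> real^3 \<Rightarrow> real) \<Rightarrow> bool" where
  "phi_induced_coefficients V f \<phi> h \<longleftrightarrow> (\<forall>m. \<forall>x\<in>V.
      h (m + 2) x = h (m + 1) x - \<phi> m x
    \<and> pd (m + 1) (h (m + 1)) x = \<phi> m x * pd_ln_lame f (m + 2) (m + 1) x + pd (m + 1) (\<phi> m) x
    \<and> pd (m + 2) (h (m + 1)) x = - \<phi> m x * pd_ln_lame f (m + 1) (m + 2) x)"

lemma combescure_induced_iff:
  "combescure_induced V f \<phi> fh \<longleftrightarrow>
    (\<exists>h. (\<forall>i. \<forall>x\<in>V. pd i fh x = h i x *\<^sub>R pd i f x) \<and> phi_induced_coefficients V f \<phi> h)"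
  by (simp add: combescure_induced_def phi_induced_coefficients_def Let_def pd_ln_lame_def)

lemma ball_nonvanishing_finite:
  fixes h :: "'i::finite \<Rightarrow> 'a::metric_space \<Rightarrow> 'b::real_normed_vector"
  assumes "\<And>i. continuous (at x0) (h i)" "\<And>i. h i x0 \<noteq> 0"
  shows "\<exists>\<rho>>0. \<forall>i. \<forall>y\<in>ball x0 \<rho>. h i y \<noteq> 0"
proof -
  have "\<forall>\<^sub>F y in nhds x0. h i y \<noteq> 0" for i
    using assms
    by (intro tendsto_imp_eventually_ne) (auto simp: continuous_at tendsto_at_iff_tendsto_nhds)
  then have "\<forall>\<^sub>F y in nhds x0. \<forall>i. h i y \<noteq> 0"
    by (simp add: eventually_all_finite)
  then show ?thesis
    by (auto simp: eventually_nhds_metric dist_commute)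
qed

context triply_orthogonal_system
begin

lemma phi_equationD:
  assumes "phi_equation U f m \<phi>" "x \<in> U"
  shows "pd (m + 1) (pd (m + 2) \<phi>) x + pd_ln_lame f (m + 1) (m + 2) x * pd (m + 1) \<phi> x
    + pd_ln_lame f (m + 2) (m + 1) x * pd (m + 2) \<phi> x
    + \<phi> x * (pd (m + 1) (pd_ln_lame f (m + 1) (m + 2)) x
      + pd (m + 1) (pd_ln_lame f (m + 2) (m + 2)) x) = 0"
  using bspec[OF assms(1)[unfolded phi_equation_def Let_def] assms(2)]
    pd_pd_ln_lame_mult[OF assms(2), of "m + 1" "m + 2"]
  by (simp add: pd_ln_lame_def)

end

locale combescure_functions = triply_orthogonal_system +
  fixes \<phi> :: "3 \<Rightarrow> real^3 \<Rightarrow> real"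
  assumes smooth_phi: "\<And>m. smooth_on3 U (\<phi> m)"
begin

lemma differentiable_phi: "x \<in> U \<Longrightarrow> \<phi> m differentiable (at x)"
  using smooth_on3_imp_differentiable[OF open_domain smooth_phi] .

lemma phi_conditions_if_induced:
  assumes V: "open V" "V \<subseteq> U" and h: "phi_induced_coefficients V f \<phi> h"
    and h_diff: "\<And>i x. x \<in> V \<Longrightarrow> h i differentiable (at x)" and x: "x \<in> V"
  shows "\<phi> 1 x + \<phi> 2 x + \<phi> 3 x = 0"
    and "pd (i + 1) (\<phi> (i + 1)) x
      = \<phi> i x * pd_ln_lame f (i + 2) (i + 1) x + \<phi> (i + 2) x * pd_ln_lame f i (i + 1) x"
proof -
  note h_eqs = h[unfolded phi_induced_coefficients_def, rule_format]
  have diff_phi: "\<phi> m differentiable (at y)" if "y \<in> V" for m y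
    using differentiable_phi V(2) that by blast
  show "\<phi> 1 x + \<phi> 2 x + \<phi> 3 x = 0"
    using h_eqs[OF x, of 1] h_eqs[OF x, of 2] h_eqs[OF x, of 3] by (simp add: numeral_3_cycle)
  have "pd (i + 1) (\<phi> (i + 1)) x = pd (i + 1) (\<lambda>y. h (i + 2) y - h i y) x"
    using h_eqs[of _ "i + 1"] by (intro pd_cong_open[OF V(1) x]) (simp add: add_3_cycle)
  also have "\<dots> = pd (i + 1) (h (i + 2)) x - pd (i + 1) (h i) x"
    using h_diff x by (simp add: pd_diff)
  also have "pd (i + 1) (h (i + 2)) x = pd (i + 1) (\<lambda>y. h (i + 1) y - \<phi> i y) x"
    using h_eqs[of _ i] by (intro pd_cong_open[OF V(1) x]) simp
  also have "\<dots> = \<phi> i x * pd_ln_lame f (i + 2) (i + 1) x"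
    using h_eqs[OF x, of i] h_diff diff_phi x by (simp add: pd_diff)
  also have "pd (i + 1) (h i) x = - \<phi> (i + 2) x * pd_ln_lame f i (i + 1) x"
    using h_eqs[OF x, of "i + 2"] by (simp add: add_3_cycle)
  finally show "pd (i + 1) (\<phi> (i + 1)) x
      = \<phi> i x * pd_ln_lame f (i + 2) (i + 1) x + \<phi> (i + 2) x * pd_ln_lame f i (i + 1) x"
    by simp
qed

lemma phi_conditions_if_combescure_transform:
  assumes V: "open V" "V \<subseteq> U" and fh: "triply_orthogonal V fh" "combescure_induced V f \<phi> fh"
    and x: "x \<in> V"
  shows "\<phi> 1 x + \<phi> 2 x + \<phi> 3 x = 0"
    and "pd (i + 1) (\<phi> (i + 1)) x
      = \<phi> i x * pd_ln_lame f (i + 2) (i + 1) x + \<phi> (i + 2) x * pd_ln_lame f i (i + 1) x"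
proof -
  obtain h where h: "\<And>i y. y \<in> V \<Longrightarrow> pd i fh y = h i y *\<^sub>R pd i f y" "phi_induced_coefficients V f \<phi> h"
    using fh(2) by (auto simp: combescure_induced_iff)
  have "h i differentiable (at y)" if "y \<in> V" for i y
    using fh(1) h(1) that
    by (intro combescure_coefficient_differentiable[OF V]) (auto simp: triply_orthogonal_def)
  note conditions = phi_conditions_if_induced[OF V h(2) this x]
  show "\<phi> 1 x + \<phi> 2 x + \<phi> 3 x = 0"
    by (rule conditions(1))
  show "pd (i + 1) (\<phi> (i + 1)) x
      = \<phi> i x * pd_ln_lame f (i + 2) (i + 1) x + \<phi> (i + 2) x * pd_ln_lame f i (i + 1) x"
    by (rule conditions(2))
qed

end

locale compatible_combescure_functions = combescure_functions +
  assumes phi_equation: "\<And>m. phi_equation U f m (\<phi> m)"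
    and phi_sum: "\<And>x. x \<in> U \<Longrightarrow> \<phi> 1 x + \<phi> 2 x + \<phi> 3 x = 0"
    and pd_phi: "\<And>i x. x \<in> U \<Longrightarrow> pd (i + 1) (\<phi> (i + 1)) x
      = \<phi> i x * pd_ln_lame f (i + 2) (i + 1) x + \<phi> (i + 2) x * pd_ln_lame f i (i + 1) x"
begin

lemma pd_phi_1: "x \<in> U \<Longrightarrow> pd 1 (\<phi> 1) x = \<phi> 3 x * pd_ln_lame f 2 1 x + \<phi> 2 x * pd_ln_lame f 3 1 x"
  using pd_phi[of x 3] by (simp add: numeral_3_cycle)

lemma pd_phi_2: "x \<in> U \<Longrightarrow> pd 2 (\<phi> 2) x = \<phi> 1 x * pd_ln_lame f 3 2 x + \<phi> 3 x * pd_ln_lame f 1 2 x"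
  using pd_phi[of x 1] by simp

lemma pd_phi_3: "x \<in> U \<Longrightarrow> pd 3 (\<phi> 3) x = \<phi> 2 x * pd_ln_lame f 1 3 x + \<phi> 1 x * pd_ln_lame f 2 3 x"
  using pd_phi[of x 2] by (simp add: numeral_3_cycle)

lemma pd_phi_sum: "x \<in> U \<Longrightarrow> pd j (\<phi> 1) x + pd j (\<phi> 2) x + pd j (\<phi> 3) x = 0"
proof -
  assume x: "x \<in> U"
  have "pd j (\<lambda>y. \<phi> 1 y + \<phi> 2 y + \<phi> 3 y) x = pd j (\<lambda>y. 0) x"
    using phi_sum by (intro pd_cong_open[OF open_domain x]) simp
  then show ?thesis
    by (simp add: pd_add pd_const differentiable_phi x)
qed

lemma differentiable_pd_phi: "x \<in> U \<Longrightarrow> pd j (\<phi> m) differentiable (at x)"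
  using smooth_on3_imp_differentiable[OF open_domain smooth_on3_pd[OF smooth_phi]] .

text \<open>The partial derivatives of h_1 prescribed by the Combescure conditions for m = 3 (the first two)
  and for m = 2 (the third, via h_1 = h_3 - phi_2).\<close>
definition h1_form :: "3 \<Rightarrow> real^3 \<Rightarrow> real" where
  "h1_form i = (if i = 1 then (\<lambda>y. \<phi> 3 y * pd_ln_lame f 2 1 y + pd 1 (\<phi> 3) y)
    else if i = 2 then (\<lambda>y. - \<phi> 3 y * pd_ln_lame f 1 2 y)
    else (\<lambda>y. \<phi> 2 y * pd_ln_lame f 1 3 y))"

lemma h1_form_simps:
  "h1_form 1 = (\<lambda>y. \<phi> 3 y * pd_ln_lame f 2 1 y + pd 1 (\<phi> 3) y)"
  "h1_form 2 = (\<lambda>y. - \<phi> 3 y * pd_ln_lame f 1 2 y)"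
  "h1_form 3 = (\<lambda>y. \<phi> 2 y * pd_ln_lame f 1 3 y)"
  by (simp_all add: h1_form_def)

lemma smooth_h1_form: "smooth_on3 U (h1_form i)"
proof -
  have "smooth_on3 U (h1_form 1)"
    unfolding h1_form_simps
    by (intro smooth_on3_add[OF open_domain] smooth_on3_mult[OF open_domain] smooth_phi
        smooth_pd_ln_lame smooth_on3_pd)
  moreover have "smooth_on3 U (h1_form 2)"
    unfolding h1_form_simps
    by (intro smooth_on3_mult[OF open_domain] smooth_on3_minus[OF open_domain] smooth_phi
      smooth_pd_ln_lame)
  moreover have "smooth_on3 U (h1_form 3)"
    unfolding h1_form_simps by (intro smooth_on3_mult[OF open_domain] smooth_phi smooth_pd_ln_lame)
  ultimately show ?thesis
    using exhaust_3[of i] by auto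
qed

lemma h1_form_closed_12:
  assumes x: "x \<in> U"
  shows "pd 2 (h1_form 1) x = pd 1 (h1_form 2) x"
proof -
  have "pd 2 (h1_form 1) x
      = pd 2 (\<phi> 3) x * pd_ln_lame f 2 1 x + \<phi> 3 x * pd 2 (pd_ln_lame f 2 1) x + pd 2 (pd 1 (\<phi> 3)) x"
    by (simp add: h1_form_simps pd_add pd_mult differentiable_phi differentiable_pd_phi
        differentiable_pd_ln_lame x)
  moreover have "pd 1 (h1_form 2) x
      = - pd 1 (\<phi> 3) x * pd_ln_lame f 1 2 x - \<phi> 3 x * pd 1 (pd_ln_lame f 1 2) x"
    by (simp add: h1_form_simps pd_mult pd_minus differentiable_phi differentiable_pd_ln_lame x)
  moreover have "pd 2 (pd_ln_lame f 2 1) x = pd 1 (pd_ln_lame f 2 2) x"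
    using pd_ln_lame_commute[OF x] .
  moreover have "pd 2 (pd 1 (\<phi> 3)) x = pd 1 (pd 2 (\<phi> 3)) x"
    using smooth_on3_pd_commute[OF open_domain smooth_phi x] .
  ultimately show ?thesis
    using phi_equationD[OF phi_equation x, of 3] by (simp add: numeral_3_cycle algebra_simps)
qed

lemma h1_form_closed_13:
  assumes x: "x \<in> U"
  shows "pd 3 (h1_form 1) x = pd 1 (h1_form 3) x"
proof -
  have "pd 1 (\<phi> 3) y = - (\<phi> 3 y * pd_ln_lame f 2 1 y + \<phi> 2 y * pd_ln_lame f 3 1 y) - pd 1 (\<phi> 2) y"
    if "y \<in> U" for y
    using pd_phi_sum[OF that, of 1] pd_phi_1[OF that] by (simp add: algebra_simps)
  then have "pd 3 (pd 1 (\<phi> 3)) x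
      = pd 3 (\<lambda>y. - (\<phi> 3 y * pd_ln_lame f 2 1 y + \<phi> 2 y * pd_ln_lame f 3 1 y) - pd 1 (\<phi> 2) y) x"
    by (intro pd_cong_open[OF open_domain x])
  then have "pd 3 (h1_form 1) x
      = - (pd 3 (\<phi> 2) x * pd_ln_lame f 3 1 x + \<phi> 2 x * pd 3 (pd_ln_lame f 3 1) x) - pd 3 (pd 1 (\<phi> 2)) x"
    by (simp add: h1_form_simps pd_add pd_diff pd_minus pd_mult differentiable_phi differentiable_pd_phi
        differentiable_pd_ln_lame x)
  moreover have "pd 1 (h1_form 3) x
      = pd 1 (\<phi> 2) x * pd_ln_lame f 1 3 x + \<phi> 2 x * pd 1 (pd_ln_lame f 1 3) x"
    by (simp add: h1_form_simps pd_mult differentiable_phi differentiable_pd_ln_lame x)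
  moreover have "pd 1 (pd_ln_lame f 1 3) x = pd 3 (pd_ln_lame f 1 1) x"
    using pd_ln_lame_commute[OF x] .
  ultimately show ?thesis
    using phi_equationD[OF phi_equation x, of 2] by (simp add: numeral_3_cycle algebra_simps)
qed

lemma h1_form_closed_23:
  assumes x: "x \<in> U"
  shows "pd 3 (h1_form 2) x = pd 2 (h1_form 3) x"
proof -
  have "pd 3 (h1_form 2) x = - pd 3 (\<phi> 3) x * pd_ln_lame f 1 2 x - \<phi> 3 x * pd 3 (pd_ln_lame f 1 2) x"
    by (simp add: h1_form_simps pd_mult pd_minus differentiable_phi differentiable_pd_ln_lame x)
  moreover have "pd 2 (h1_form 3) x
      = pd 2 (\<phi> 2) x * pd_ln_lame f 1 3 x + \<phi> 2 x * pd 2 (pd_ln_lame f 1 3) x"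
    by (simp add: h1_form_simps pd_mult differentiable_phi differentiable_pd_ln_lame x)
  moreover have "pd 2 (pd_ln_lame f 1 3) x = pd 3 (pd_ln_lame f 1 2) x"
    using pd_ln_lame_commute[OF x] .
  moreover have "\<phi> 1 x = - \<phi> 2 x - \<phi> 3 x"
    using phi_sum[OF x] by (simp add: algebra_simps)
  ultimately show ?thesis
    using pd_phi_2[OF x] pd_phi_3[OF x] lame_equation[OF x, of 1 2 3] by (simp add: algebra_simps)
qed

lemma h1_form_closed:
  assumes x: "x \<in> U"
  shows "pd j (h1_form i) x = pd i (h1_form j) x"
  using exhaust_3[of i] exhaust_3[of j]
  by (elim disjE) (simp_all add: h1_form_closed_12[OF x] h1_form_closed_13[OF x]
    h1_form_closed_23[OF x])

text \<open>h_2 = h_1 - phi_3 and h_3 = h_1 + phi_2 are forced by the relations for m = 3 and m = 2.\<close>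
definition potential_coefficients :: "(real^3 \<Rightarrow> real) \<Rightarrow> 3 \<Rightarrow> real^3 \<Rightarrow> real" where
  "potential_coefficients g i =
    (if i = 1 then g else if i = 2 then (\<lambda>y. g y - \<phi> 3 y) else (\<lambda>y. g y + \<phi> 2 y))"

lemma potential_coefficients_simps:
  "potential_coefficients g 1 = g"
  "potential_coefficients g 2 = (\<lambda>y. g y - \<phi> 3 y)"
  "potential_coefficients g 3 = (\<lambda>y. g y + \<phi> 2 y)"
  by (simp_all add: potential_coefficients_def)

lemma potential_coefficients_apply:
  "potential_coefficients g 1 y = g y"
  "potential_coefficients g 2 y = g y - \<phi> 3 y"
  "potential_coefficients g 3 y = g y + \<phi> 2 y"
  by (simp_all add: potential_coefficients_simps)

lemma pd_potential_coefficients: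
  assumes V: "open V" "V \<subseteq> U" and g: "\<And>y. y \<in> V \<Longrightarrow> g differentiable (at y)"
    "\<And>i y. y \<in> V \<Longrightarrow> pd i g y = h1_form i y" and y: "y \<in> V"
  shows "pd j (potential_coefficients g 1) y = h1_form j y"
    and "pd j (potential_coefficients g 2) y = h1_form j y - pd j (\<phi> 3) y"
    and "pd j (potential_coefficients g 3) y = h1_form j y + pd j (\<phi> 2) y"
  using g y differentiable_phi[of y] V(2)
  by (auto simp: potential_coefficients_simps pd_diff pd_add)

lemma potential_coefficients_combescure_system:
  assumes V: "open V" "V \<subseteq> U" and g: "\<And>y. y \<in> V \<Longrightarrow> g differentiable (at y)"
    "\<And>i y. y \<in> V \<Longrightarrow> pd i g y = h1_form i y" and y: "y \<in> V" and ij: "i \<noteq> j"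
  shows "pd j (potential_coefficients g i) y
    = (potential_coefficients g j y - potential_coefficients g i y) * pd_ln_lame f i j y"
proof -
  have yU: "y \<in> U" using V(2) y by blast
  have phi_1: "\<phi> 1 y = - \<phi> 2 y - \<phi> 3 y"
    using phi_sum[OF yU] by (simp add: algebra_simps)
  have pd1_phi3: "pd 1 (\<phi> 3) y = - pd 1 (\<phi> 1) y - pd 1 (\<phi> 2) y"
    using pd_phi_sum[OF yU, of 1] by (simp add: algebra_simps)
  show ?thesis
    using exhaust_3[of i] exhaust_3[of j] ij
    by (elim disjE) (simp_all add: pd_potential_coefficients[OF V g y] potential_coefficients_apply
        h1_form_simps pd_phi_1[OF yU] pd_phi_2[OF yU] pd_phi_3[OF yU] phi_1 pd1_phi3 algebra_simps)
qed

lemma phi_induced_potential_coefficients: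
  assumes V: "open V" "V \<subseteq> U" and g: "\<And>y. y \<in> V \<Longrightarrow> g differentiable (at y)"
    "\<And>i y. y \<in> V \<Longrightarrow> pd i g y = h1_form i y"
  shows "phi_induced_coefficients V f \<phi> (potential_coefficients g)"
  unfolding phi_induced_coefficients_def
proof (intro allI ballI)
  fix m y assume y: "y \<in> V"
  then have yU: "y \<in> U" using V(2) by blast
  have phi_1: "\<phi> 1 y = - \<phi> 2 y - \<phi> 3 y"
    using phi_sum[OF yU] by (simp add: algebra_simps)
  have pd2_phi1: "pd 2 (\<phi> 1) y = - pd 2 (\<phi> 2) y - pd 2 (\<phi> 3) y"
    using pd_phi_sum[OF yU, of 2] by (simp add: algebra_simps)
  show "potential_coefficients g (m + 2) y = potential_coefficients g (m + 1) y - \<phi> m y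
    \<and> pd (m + 1) (potential_coefficients g (m + 1)) y
      = \<phi> m y * pd_ln_lame f (m + 2) (m + 1) y + pd (m + 1) (\<phi> m) y
    \<and> pd (m + 2) (potential_coefficients g (m + 1)) y = - \<phi> m y * pd_ln_lame f (m + 1) (m + 2) y"
    using exhaust_3[of m]
    by (elim disjE) (simp_all add: numeral_3_cycle potential_coefficients_combescure_system[OF V g y]
        pd_potential_coefficients[OF V g y] potential_coefficients_apply h1_form_simps
        pd_phi_2[OF yU] phi_1 pd2_phi1 algebra_simps)
qed

lemma exists_nonvanishing_potential_coefficients:
  assumes x0: "x0 \<in> U"
  obtains \<rho> g where "\<rho> > 0" "ball x0 \<rho> \<subseteq> U" "smooth_on3 (ball x0 \<rho>) g"
    "\<And>i y. y \<in> ball x0 \<rho> \<Longrightarrow> pd i g y = h1_form i y"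
    "\<And>i y. y \<in> ball x0 \<rho> \<Longrightarrow> potential_coefficients g i y \<noteq> 0"
proof -
  obtain r where r: "r > 0" "ball x0 r \<subseteq> U"
    using open_domain x0 open_contains_ball by blast
  obtain g0 where g0: "smooth_on3 (ball x0 r) g0" "\<And>i y. y \<in> ball x0 r \<Longrightarrow> pd i g0 y = h1_form i y"
    using smooth_potential_on_ball[of x0 r h1_form] smooth_on3_subset[OF r(2) smooth_h1_form]
      h1_form_closed r(2) by blast
  define c where "c = 1 + \<bar>g0 x0\<bar> + \<bar>\<phi> 3 x0\<bar> + \<bar>\<phi> 2 x0\<bar>"
  define g where "g = (\<lambda>y. g0 y + c)"
  have "smooth_on3 (ball x0 r) g"
    unfolding g_def by (rule smooth_on3_add[OF open_ball g0(1) smooth_on3_const])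
  moreover have "pd i g y = h1_form i y" if "y \<in> ball x0 r" for i y
    unfolding g_def using smooth_on3_imp_differentiable[OF open_ball g0(1) that] g0(2)[OF that]
    by (simp add: pd_add pd_const)
  ultimately have g: "smooth_on3 (ball x0 r) g" "\<And>i y. y \<in> ball x0 r \<Longrightarrow> pd i g y = h1_form i y"
    by blast+
  \<comment> \<open>The constant c makes all three coefficients positive at x0.\<close>
  have "potential_coefficients g i x0 \<noteq> 0" for i
    using exhaust_3[of i] by (auto simp: potential_coefficients_apply g_def c_def)
  moreover have "continuous (at x0) (potential_coefficients g i)" for i
  proof -
    have "smooth_on3 (ball x0 r) (\<phi> m)" for m
      using smooth_on3_subset[OF r(2) smooth_phi] .
    then have "smooth_on3 (ball x0 r) (potential_coefficients g i)"
      using exhaust_3[of i] g(1)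
      by (auto simp: potential_coefficients_simps intro!: smooth_on3_add[OF open_ball]
        smooth_on3_diff[OF open_ball])
    then have "potential_coefficients g i differentiable (at x0)"
      using r(1) by (intro smooth_on3_imp_differentiable[OF open_ball]) auto
    then show ?thesis
      by (rule differentiable_imp_continuous_within)
  qed
  ultimately obtain \<rho> where \<rho>: "\<rho> > 0" "\<And>i y. y \<in> ball x0 \<rho> \<Longrightarrow> potential_coefficients g i y \<noteq> 0"
    using ball_nonvanishing_finite[of x0 "potential_coefficients g"] by blast
  have sub: "ball x0 (min r \<rho>) \<subseteq> ball x0 r" "ball x0 (min r \<rho>) \<subseteq> ball x0 \<rho>"
    by auto
  show ?thesis
    using \<rho> r g smooth_on3_subset[OF sub(1) g(1)] sub
    by (intro that[of "min r \<rho>" g]) auto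
qed

theorem exists_local_combescure_transform:
  assumes x0: "x0 \<in> U"
  shows "\<exists>V. open V \<and> x0 \<in> V \<and> V \<subseteq> U \<and> (\<exists>fh. triply_orthogonal V fh \<and> combescure_induced V f \<phi> fh)"
proof -
  obtain \<rho> g where \<rho>: "\<rho> > 0" "ball x0 \<rho> \<subseteq> U" and g: "smooth_on3 (ball x0 \<rho>) g"
    "\<And>i y. y \<in> ball x0 \<rho> \<Longrightarrow> pd i g y = h1_form i y"
    and nonzero: "\<And>i y. y \<in> ball x0 \<rho> \<Longrightarrow> potential_coefficients g i y \<noteq> 0"
    using exists_nonvanishing_potential_coefficients[OF x0] by blast
  have g_diff: "\<And>y. y \<in> ball x0 \<rho> \<Longrightarrow> g differentiable (at y)"
    using smooth_on3_imp_differentiable[OF open_ball g(1)] .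
  have "smooth_on3 (ball x0 \<rho>) (potential_coefficients g i)" for i
    using exhaust_3[of i] g(1) smooth_on3_subset[OF \<rho>(2) smooth_phi]
    by (auto simp: potential_coefficients_simps intro!: smooth_on3_add[OF open_ball]
      smooth_on3_diff[OF open_ball])
  then obtain fh where "triply_orthogonal (ball x0 \<rho>) fh"
    and fh: "\<forall>i. \<forall>y\<in>ball x0 \<rho>. pd i fh y = potential_coefficients g i y *\<^sub>R pd i f y"
    using exists_combescure_transform[OF \<rho>(2) _ nonzero
        potential_coefficients_combescure_system[OF open_ball \<rho>(2) g_diff g(2)]] by blast
  moreover have "combescure_induced (ball x0 \<rho>) f \<phi> fh"
    using fh phi_induced_potential_coefficients[OF open_ball \<rho>(2) g_diff g(2)]
    by (auto simp: combescure_induced_iff)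
  ultimately show ?thesis
    using \<rho> by (intro exI[of _ "ball x0 \<rho>"]) auto
qed

end

lemma (in combescure_functions) local_combescure_transforms_if_phi_conditions:
  assumes "\<And>m. phi_equation U f m (\<phi> m)" and "\<forall>x\<in>U. \<phi> 1 x + \<phi> 2 x + \<phi> 3 x = 0"
    and "\<forall>i. \<forall>x\<in>U. pd (i + 1) (\<phi> (i + 1)) x
      = \<phi> i x * pd_ln_lame f (i + 2) (i + 1) x + \<phi> (i + 2) x * pd_ln_lame f i (i + 1) x"
  shows "\<forall>x0\<in>U. \<exists>V. open V \<and> x0 \<in> V \<and> V \<subseteq> U \<and>
    (\<exists>fh. triply_orthogonal V fh \<and> combescure_induced V f \<phi> fh)"
proof -
  interpret compatible_combescure_functions U f \<phi>
    using assms by unfold_locales auto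
  show ?thesis
    using exists_local_combescure_transform by blast
qed

theorem proposition2p4:
  fixes U :: "(real^3) set" and f :: "real^3 \<Rightarrow> real^3" and \<phi> :: "3 \<Rightarrow> real^3 \<Rightarrow> real"
  assumes "open U" and "connected U"
    and "triply_orthogonal U f"
    and "\<And>m. smooth_on3 U (\<phi> m)"
    and "\<And>m. phi_equation U f m (\<phi> m)"
  shows "(\<forall>x0\<in>U. \<exists>V. open V \<and> x0 \<in> V \<and> V \<subseteq> U \<and>
            (\<exists>fh. triply_orthogonal V fh \<and> combescure_induced V f \<phi> fh))
         \<longleftrightarrow>
         ((\<forall>x\<in>U. \<phi> 1 x + \<phi> 2 x + \<phi> 3 x = 0) \<and>
          (\<forall>i. let j = i + 1; k = i + 2; H = lame f in
             \<forall>x\<in>U. pd j (\<phi> j) x = \<phi> i x * pd j (\<lambda>y. ln (H k y)) x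
                                 + \<phi> k x * pd j (\<lambda>y. ln (H i y)) x))"
proof -
  interpret combescure_functions U f \<phi>
    using assms(1,3,4) by unfold_locales
  have derivative_conditions_iff: "(\<forall>i. let j = i + 1; k = i + 2; H = lame f in
      \<forall>x\<in>U. pd j (\<phi> j) x = \<phi> i x * pd j (\<lambda>y. ln (H k y)) x + \<phi> k x * pd j (\<lambda>y. ln (H i y)) x)
    \<longleftrightarrow> (\<forall>i. \<forall>x\<in>U. pd (i + 1) (\<phi> (i + 1)) x
      = \<phi> i x * pd_ln_lame f (i + 2) (i + 1) x + \<phi> (i + 2) x * pd_ln_lame f i (i + 1) x)"
    by (simp add: Let_def pd_ln_lame_def)
  show ?thesis
    unfolding derivative_conditions_iff
    using phi_conditions_if_combescure_transform local_combescure_transforms_if_phi_conditions[OF assms(5)]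
    by meson
qed

end
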